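(* Let $\mathcal L(k;s,t)=k+\sum_{n\ge0}u_{n+1}(s,t)k^{-n}$ and $\mathcal P(k;s,t)=p_0(s,t)k^N+\cdots+p_{N-1}(s,t)k+p_N(s,t)$ (a constant term $p_N$ allowed, $p_0\ne0$) satisfy the $N$-dcmKP equations. If $\varphi(s,t)$ satisfies $$\frac{\partial\varphi(s,t)}{\partial t_n}=-\mathcal B_n\Bigl(-\frac{\partial\varphi(s,t)}{\partial x};s,t\Bigr),\qquad n\ge1,$$ (where $\mathcal B_n(k;s,t)$ is evaluated at $k=-\partial\varphi/\partial x$), then $$\tilde{\mathcal L}(k;s,t):=\mathcal L\Bigl(k-\frac{\partial\varphi}{\partial x};s,t\Bigr)=e^{\mathrm{ad}\varphi}\mathcal L,\qquad \tilde{\mathcal P}(k;s,t):=e^{\partial\varphi/\partial s}\,\mathcal P\Bigl(k-\frac{\partial\varphi}{\partial x};s,t\Bigr)$$ also satisfy the $N$-dcmKP equations.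
   Context: Fix a positive integer $N$. Variables $s$ (continuous), $x$, $t=(t_1,t_2,\dots)$, where $x$ and $t_1$ appear only through $x+t_1$. Poisson bracket $\{f,g\}=\frac{\partial f}{\partial k}\frac{\partial g}{\partial x}-\frac{\partial f}{\partial x}\frac{\partial g}{\partial k}$; $(\mathrm{ad}f)g=\{f,g\}$. For a polynomial $\mathcal P=p_0k^N+\cdots+p_N$ with $p_0\ne0$, $\log\mathcal P:=\log p_0+N\log k+\log(1+\sum_{n=1}^N(p_n/p_0)k^{-n})$ expanded in $k^{-1}$. The $N$-dcmKP equations are, for $n\ge1$, $\partial_{t_n}\mathcal L=\{\mathcal B_n,\mathcal L\}$ with $\mathcal B_n:=(\mathcal L^n)_{>0}$ (projection onto positive powers of $k$), $\partial_s\mathcal L=\{\log\mathcal P,\mathcal L\}$, $\partial_{t_n}\log\mathcal P=\partial_s\mathcal B_n-\{\log\mathcal P,\mathcal B_n\}$. *)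

theory Defs
  imports "HOL-Analysis.Analysis"
begin

text \<open>Coefficient functions depend on s (real) and on t :: nat => real, where
  t 0 is the variable x and t n (n >= 1) is the time t_n.\<close>

type_synonym fn = "real \<Rightarrow> (nat \<Rightarrow> real) \<Rightarrow> real"

text \<open>Formal series in k: coefficient of k^j (j :: int).  All series used are bounded above.\<close>
type_synonym ser = "int \<Rightarrow> fn"

datatype var = S | T nat

definition pd :: "var \<Rightarrow> fn \<Rightarrow> fn" where
  "pd v F = (case v of
      S \<Rightarrow> (\<lambda>s t. deriv (\<lambda>h. F h t) s)
    | T n \<Rightarrow> (\<lambda>s t. deriv (\<lambda>h. F s (t(n := h))) (t n)))"

definition partial_differentiable :: "var \<Rightarrow> fn \<Rightarrow> bool" where
  "partial_differentiable v F = (\<forall>s t. case v of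
      S \<Rightarrow> (\<lambda>h. F h t) differentiable (at s)
    | T n \<Rightarrow> (\<lambda>h. F s (t(n := h))) differentiable (at (t n)))"

definition smooth :: "fn \<Rightarrow> bool" where
  "smooth F = (\<forall>vs v w. partial_differentiable v (fold pd vs F) \<and>
      pd v (pd w (fold pd vs F)) = pd w (pd v (fold pd vs F)))"

text \<open>x and t_1 appear only through x + t_1.\<close>
definition xt_conv :: "fn \<Rightarrow> bool" where
  "xt_conv F = (\<forall>s t a. F s (t(0 := t 0 + a, 1 := t 1 - a)) = F s t)"

definition sone :: ser where "sone = (\<lambda>j s t. if j = 0 then 1 else 0)"
definition sadd :: "ser \<Rightarrow> ser \<Rightarrow> ser" where "sadd f g = (\<lambda>j s t. f j s t + g j s t)"
definition ssub :: "ser \<Rightarrow> ser \<Rightarrow> ser" where "ssub f g = (\<lambda>j s t. f j s t - g j s t)"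
definition smul :: "ser \<Rightarrow> ser \<Rightarrow> ser" where
  "smul f g = (\<lambda>j s t. \<Sum>i\<in>{i. f i s t \<noteq> 0 \<and> g (j - i) s t \<noteq> 0}. f i s t * g (j - i) s t)"
definition spow :: "ser \<Rightarrow> nat \<Rightarrow> ser" where "spow f n = (smul f ^^ n) sone"

definition sd :: "var \<Rightarrow> ser \<Rightarrow> ser" where "sd v f = (\<lambda>j. pd v (f j))"
definition dk :: "ser \<Rightarrow> ser" where "dk f = (\<lambda>j s t. of_int (j + 1) * f (j + 1) s t)"

definition pos :: "ser \<Rightarrow> ser" where "pos f = (\<lambda>j. if 0 < j then f j else (\<lambda>s t. 0))"
definition Bn :: "ser \<Rightarrow> nat \<Rightarrow> ser" where "Bn L n = pos (spow L n)"

definition pbr :: "ser \<Rightarrow> ser \<Rightarrow> ser" where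
  "pbr f g = ssub (smul (dk f) (sd (T 0) g)) (smul (sd (T 0) f) (dk g))"

text \<open>P = p_0 k^N + ... + p_N as a series\<close>
definition polyser :: "nat \<Rightarrow> (nat \<Rightarrow> fn) \<Rightarrow> ser" where
  "polyser N p = (\<lambda>j s t. if 0 \<le> j \<and> j \<le> int N then p (N - nat j) s t else 0)"

definition Qser :: "nat \<Rightarrow> (nat \<Rightarrow> fn) \<Rightarrow> ser" where
  "Qser N p = (\<lambda>j s t. if - int N \<le> j \<and> j < 0 then p (nat (- j)) s t / p 0 s t else 0)"

text \<open>log(1+Q) expanded in k^{-1}: the coefficient of k^j only receives Q^m with m <= -j.\<close>
definition logser :: "nat \<Rightarrow> (nat \<Rightarrow> fn) \<Rightarrow> ser" where
  "logser N p = (\<lambda>j s t. \<Sum>m = 1..nat (- j).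
      ((-1) ^ (m + 1) / real m) * spow (Qser N p) m j s t)"

text \<open>log P = log p_0 + N log k + log(1+Q); its k-derivative and its derivative in a
  variable v (the real-valued log p_0 is taken as ln |p_0|; only its derivatives occur).\<close>
definition dlogP_k :: "nat \<Rightarrow> (nat \<Rightarrow> fn) \<Rightarrow> ser" where
  "dlogP_k N p = (\<lambda>j s t. (if j = -1 then real N else 0) + dk (logser N p) j s t)"

definition dlogP_v :: "var \<Rightarrow> nat \<Rightarrow> (nat \<Rightarrow> fn) \<Rightarrow> ser" where
  "dlogP_v v N p = (\<lambda>j s t. (if j = 0 then pd v (\<lambda>s t. ln \<bar>p 0 s t\<bar>) s t else 0)
      + sd v (logser N p) j s t)"

definition brlog :: "nat \<Rightarrow> (nat \<Rightarrow> fn) \<Rightarrow> ser \<Rightarrow> ser" where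
  "brlog N p g = ssub (smul (dlogP_k N p) (sd (T 0) g)) (smul (dlogP_v (T 0) N p) (dk g))"

definition dcmKP :: "nat \<Rightarrow> ser \<Rightarrow> (nat \<Rightarrow> fn) \<Rightarrow> bool" where
  "dcmKP N L p =
     ((\<forall>n\<ge>1. sd (T n) L = pbr (Bn L n) L) \<and>
      sd S L = brlog N p L \<and>
      (\<forall>n\<ge>1. dlogP_v (T n) N p = ssub (sd S (Bn L n)) (brlog N p (Bn L n))))"

definition evalpos :: "ser \<Rightarrow> fn \<Rightarrow> fn" where
  "evalpos f a = (\<lambda>s t. \<Sum>j\<in>{j. 0 < j \<and> f j s t \<noteq> 0}. f j s t * a s t ^ nat j)"

text \<open>f(k - a), expanded in k^{-1} (f bounded above)\<close>
definition sshift :: "fn \<Rightarrow> ser \<Rightarrow> ser" where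
  "sshift a f = (\<lambda>j s t. \<Sum>m\<in>{m. j \<le> m \<and> f m s t \<noteq> 0}.
      f m s t * ((of_int m :: real) gchoose nat (m - j)) * (- a s t) ^ nat (m - j))"

definition cst :: "fn \<Rightarrow> ser" where "cst F = (\<lambda>j. if j = 0 then F else (\<lambda>s t. 0))"
definition ad :: "fn \<Rightarrow> ser \<Rightarrow> ser" where "ad F g = pbr (cst F) g"
definition expad :: "fn \<Rightarrow> ser \<Rightarrow> ser" where
  "expad F f = (\<lambda>j s t. \<Sum>m. ((ad F ^^ m) f) j s t / fact m)"

end

theory Submission
  imports Defs "HOL-Computational_Algebra.Formal_Laurent_Series"
begin

text \<open>
  Write \<open>a = \<partial>\<^sub>x\<phi>\<close> and \<open>g = \<partial>\<^sub>s\<phi>\<close>. The substitution \<open>k \<mapsto> k - a\<close> is a ring homomorphism on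
  series bounded above in \<open>k\<close>, commutes with \<open>\<partial>\<^sub>k\<close>, and by the chain rule turns \<open>\<partial>\<^sub>v\<close> into
  \<open>\<partial>\<^sub>v - (\<partial>\<^sub>va) \<partial>\<^sub>k\<close>. For \<open>log \<P>\<close> one only needs its derivatives, which are characterised by
  \<open>\<P> \<partial>\<^sub>k log \<P> = \<partial>\<^sub>k\<P>\<close> and \<open>\<P> \<partial>\<^sub>v log \<P> = \<partial>\<^sub>v\<P>\<close>; hence for \<open>\<P>' = e\<^sup>g \<P>(k - a)\<close> the derivatives
  of \<open>log \<P>'\<close> are those of \<open>log \<P>\<close> shifted, plus \<open>\<partial>\<^sub>vg\<close> and the chain rule correction.
  The hypothesis on \<open>\<partial>\<^sub>t\<^sub>n\<phi>\<close> says exactly that \<open>\<B>\<^sub>n(L(k - a)) = \<B>\<^sub>n(L)(k - a) + \<partial>\<^sub>t\<^sub>n\<phi>\<close>, the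
  constant term being lost by the projection. Substituting all this into the equations, every
  correction term cancels because mixed partial derivatives of \<open>\<phi>\<close> commute.
  Finally \<open>ad \<phi> = -a \<partial>\<^sub>k\<close>, so \<open>e\<^bsup>ad \<phi>\<^esup>\<close> is the Taylor expansion of the shift.
\<close>

section \<open>Partial derivatives\<close>

abbreviation pdiff :: "var \<Rightarrow> fn \<Rightarrow> bool" where "pdiff \<equiv> partial_differentiable"

definition coord :: "var \<Rightarrow> real \<Rightarrow> (nat \<Rightarrow> real) \<Rightarrow> real" where
  "coord v s t = (case v of S \<Rightarrow> s | T n \<Rightarrow> t n)"

definition upd_s :: "var \<Rightarrow> real \<Rightarrow> (nat \<Rightarrow> real) \<Rightarrow> real \<Rightarrow> real" where
  "upd_s v s t h = (case v of S \<Rightarrow> h | T n \<Rightarrow> s)"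

definition upd_t :: "var \<Rightarrow> real \<Rightarrow> (nat \<Rightarrow> real) \<Rightarrow> real \<Rightarrow> (nat \<Rightarrow> real)" where
  "upd_t v s t h = (case v of S \<Rightarrow> t | T n \<Rightarrow> t(n := h))"

lemma upd_coord [simp]: "upd_s v s t (coord v s t) = s" "upd_t v s t (coord v s t) = t"
  by (cases v; simp add: upd_s_def upd_t_def coord_def)+

lemma pd_eq_deriv: "pd v F s t = deriv (\<lambda>h. F (upd_s v s t h) (upd_t v s t h)) (coord v s t)"
  by (cases v) (simp_all add: pd_def upd_s_def upd_t_def coord_def)

lemma pdiff_iff:
  "pdiff v F \<longleftrightarrow> (\<forall>s t. (\<lambda>h. F (upd_s v s t h) (upd_t v s t h)) differentiable (at (coord v s t)))"
  by (cases v) (simp_all add: partial_differentiable_def upd_s_def upd_t_def coord_def)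

lemma pdiffD:
  assumes "pdiff v F"
  shows "(\<lambda>h. F (upd_s v s t h) (upd_t v s t h)) field_differentiable (at (coord v s t))"
  using assms unfolding pdiff_iff
  by (simp add: differentiable_def field_differentiable_def has_real_derivative_iff)

lemma has_field_derivative_pd:
  "pdiff v F \<Longrightarrow>
    ((\<lambda>h. F (upd_s v s t h) (upd_t v s t h)) has_field_derivative pd v F s t) (at (coord v s t))"
  by (simp add: pd_eq_deriv DERIV_deriv_iff_field_differentiable pdiffD)

lemma pd_const [simp]: "pd v (\<lambda>s t. c) = (\<lambda>s t. 0)"
  by (intro ext) (simp add: pd_eq_deriv)

lemma pdiff_const [simp]: "pdiff v (\<lambda>s t. c)"
  by (simp add: pdiff_iff)

lemma pdiff_add [simp]: "pdiff v F \<Longrightarrow> pdiff v G \<Longrightarrow> pdiff v (\<lambda>s t. F s t + G s t)"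
  by (simp add: pdiff_iff)

lemma pdiff_diff [simp]: "pdiff v F \<Longrightarrow> pdiff v G \<Longrightarrow> pdiff v (\<lambda>s t. F s t - G s t)"
  by (simp add: pdiff_iff)

lemma pdiff_mult [simp]: "pdiff v F \<Longrightarrow> pdiff v G \<Longrightarrow> pdiff v (\<lambda>s t. F s t * G s t)"
  by (simp add: pdiff_iff)

lemma pdiff_minus [simp]: "pdiff v F \<Longrightarrow> pdiff v (\<lambda>s t. - F s t)"
  by (simp add: pdiff_iff)

lemma pdiff_power [simp]: "pdiff v F \<Longrightarrow> pdiff v (\<lambda>s t. F s t ^ n)"
  by (simp add: pdiff_iff)

lemma pdiff_cmult [simp]: "pdiff v F \<Longrightarrow> pdiff v (\<lambda>s t. c * F s t)"
  by (simp add: pdiff_iff)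

lemma pdiff_sum:
  "finite A \<Longrightarrow> (\<And>i. i \<in> A \<Longrightarrow> pdiff v (F i)) \<Longrightarrow> pdiff v (\<lambda>s t. \<Sum>i\<in>A. F i s t)"
  unfolding pdiff_iff by (auto intro!: differentiable_sum)

lemma pdiff_divide:
  "pdiff v F \<Longrightarrow> pdiff v G \<Longrightarrow> (\<And>s t. G s t \<noteq> 0) \<Longrightarrow> pdiff v (\<lambda>s t. F s t / G s t)"
  unfolding pdiff_iff by (auto intro!: differentiable_divide)

lemma pdiff_exp: "pdiff v F \<Longrightarrow> pdiff v (\<lambda>s t. exp (F s t))"
  unfolding pdiff_iff by (metis DERIV_chain2 DERIV_exp differentiable_def has_real_derivative_iff)

lemma pd_add:
  "pdiff v F \<Longrightarrow> pdiff v G \<Longrightarrow> pd v (\<lambda>s t. F s t + G s t) = (\<lambda>s t. pd v F s t + pd v G s t)"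
  by (intro ext) (simp add: pd_eq_deriv pdiffD)

lemma pd_diff:
  "pdiff v F \<Longrightarrow> pdiff v G \<Longrightarrow> pd v (\<lambda>s t. F s t - G s t) = (\<lambda>s t. pd v F s t - pd v G s t)"
  by (intro ext) (simp add: pd_eq_deriv pdiffD)

lemma pd_mult:
  "pdiff v F \<Longrightarrow> pdiff v G \<Longrightarrow>
    pd v (\<lambda>s t. F s t * G s t) = (\<lambda>s t. pd v F s t * G s t + F s t * pd v G s t)"
  by (intro ext) (simp add: pd_eq_deriv pdiffD)

lemma pd_minus: "pdiff v F \<Longrightarrow> pd v (\<lambda>s t. - F s t) = (\<lambda>s t. - pd v F s t)"
  by (intro ext) (simp add: pd_eq_deriv pdiffD)

lemma pd_cmult: "pdiff v F \<Longrightarrow> pd v (\<lambda>s t. c * F s t) = (\<lambda>s t. c * pd v F s t)"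
  by (intro ext) (simp add: pd_eq_deriv pdiffD deriv_cmult)

lemma pd_power:
  "pdiff v F \<Longrightarrow> pd v (\<lambda>s t. F s t ^ n) = (\<lambda>s t. of_nat n * F s t ^ (n - 1) * pd v F s t)"
  by (intro ext) (simp add: pd_eq_deriv pdiffD deriv_pow)

lemma pd_divide:
  "pdiff v F \<Longrightarrow> pdiff v G \<Longrightarrow> (\<And>s t. G s t \<noteq> 0) \<Longrightarrow>
    pd v (\<lambda>s t. F s t / G s t) = (\<lambda>s t. (pd v F s t * G s t - F s t * pd v G s t) / G s t ^ 2)"
  by (intro ext) (simp add: pd_eq_deriv pdiffD)

lemma pd_sum:
  assumes "finite A" "\<And>i. i \<in> A \<Longrightarrow> pdiff v (F i)"
  shows "pd v (\<lambda>s t. \<Sum>i\<in>A. F i s t) = (\<lambda>s t. \<Sum>i\<in>A. pd v (F i) s t)"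
proof (intro ext)
  fix s t
  have "((\<lambda>h. \<Sum>i\<in>A. F i (upd_s v s t h) (upd_t v s t h)) has_field_derivative
          (\<Sum>i\<in>A. pd v (F i) s t)) (at (coord v s t))"
    by (rule DERIV_sum) (use assms has_field_derivative_pd in auto)
  then show "pd v (\<lambda>s t. \<Sum>i\<in>A. F i s t) s t = (\<Sum>i\<in>A. pd v (F i) s t)"
    by (simp add: pd_eq_deriv DERIV_imp_deriv)
qed

lemma pd_exp: "pdiff v F \<Longrightarrow> pd v (\<lambda>s t. exp (F s t)) = (\<lambda>s t. exp (F s t) * pd v F s t)"
  by (intro ext) (simp add: pd_eq_deriv[of v "\<lambda>s t. exp (F s t)"]
      DERIV_imp_deriv[OF DERIV_chain2[OF DERIV_exp has_field_derivative_pd]])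

lemma DERIV_ln_abs: "x \<noteq> 0 \<Longrightarrow> DERIV (\<lambda>y::real. ln \<bar>y\<bar>) x :> inverse x"
proof -
  assume "x \<noteq> 0"
  have "(\<lambda>y::real. ln \<bar>y\<bar>) = (\<lambda>y. ln (y\<^sup>2) / 2)"
  proof
    fix y :: real
    show "ln \<bar>y\<bar> = ln (y\<^sup>2) / 2"
      by (cases "y = 0") (simp_all add: ln_realpow[of "\<bar>y\<bar>" 2, simplified])
  qed
  moreover have "0 < x\<^sup>2" using \<open>x \<noteq> 0\<close> by simp
  ultimately show ?thesis
    using \<open>x \<noteq> 0\<close> by (auto intro!: derivative_eq_intros simp: power2_eq_square field_simps)
qed

lemma has_field_derivative_pd_ln_abs:
  assumes "pdiff v F" "\<And>s t. F s t \<noteq> 0"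
  shows "((\<lambda>h. ln \<bar>F (upd_s v s t h) (upd_t v s t h)\<bar>) has_field_derivative
           pd v F s t / F s t) (at (coord v s t))"
  using DERIV_chain2[OF DERIV_ln_abs has_field_derivative_pd[OF assms(1)]] assms(2)[of s t]
  by (simp add: field_simps)

lemma pd_ln_abs:
  "pdiff v F \<Longrightarrow> (\<And>s t. F s t \<noteq> 0) \<Longrightarrow> pd v (\<lambda>s t. ln \<bar>F s t\<bar>) = (\<lambda>s t. pd v F s t / F s t)"
  by (intro ext) (simp add: pd_eq_deriv[of v "\<lambda>s t. ln \<bar>F s t\<bar>"] DERIV_imp_deriv
      has_field_derivative_pd_ln_abs)

section \<open>Series bounded above in \<open>k\<close>\<close>

notation fls_nth (infixl \<open>$$\<close> 75)

definition deg_le :: "int \<Rightarrow> ser \<Rightarrow> bool" where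
  "deg_le M f \<longleftrightarrow> (\<forall>j>M. \<forall>s t. f j s t = 0)"

definition deg_bounded :: "ser \<Rightarrow> bool" where
  "deg_bounded f \<longleftrightarrow> (\<exists>M. deg_le M f)"

definition ser_pdiff :: "var \<Rightarrow> ser \<Rightarrow> bool" where
  "ser_pdiff v f \<longleftrightarrow> (\<forall>j. pdiff v (f j))"

text \<open>At each point \<open>(s, t)\<close> a series bounded above in \<open>k\<close> is a formal Laurent series in
  \<open>X = k\<^sup>-\<^sup>1\<close>: the coefficient of \<open>k\<^sup>j\<close> becomes that of \<open>X\<^sup>-\<^sup>j\<close>.\<close>

definition fls_at :: "ser \<Rightarrow> real \<Rightarrow> (nat \<Rightarrow> real) \<Rightarrow> real fls" where
  "fls_at f s t = Abs_fls (\<lambda>i. f (- i) s t)"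

lemma deg_boundedI: "deg_le M f \<Longrightarrow> deg_bounded f"
  by (auto simp: deg_bounded_def)

lemma deg_leD: "deg_le M f \<Longrightarrow> M < j \<Longrightarrow> f j s t = 0"
  by (auto simp: deg_le_def)

lemma deg_le_mono: "deg_le M f \<Longrightarrow> M \<le> M' \<Longrightarrow> deg_le M' f"
  by (auto simp: deg_le_def)

lemma fls_at_nth: "deg_bounded f \<Longrightarrow> fls_at f s t $$ i = f (- i) s t"
  unfolding deg_bounded_def fls_at_def
proof (elim exE)
  fix M assume "deg_le M f"
  then show "Abs_fls (\<lambda>i. f (- i) s t) $$ i = f (- i) s t"
    by (intro nth_Abs_fls_lower_bound[where N = "- M"]) (auto simp: deg_le_def)
qed

lemma ser_eqI:
  assumes "deg_bounded f" "deg_bounded g" "\<And>s t. fls_at f s t = fls_at g s t"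
  shows "f = g"
proof (intro ext)
  fix j s t
  have "fls_at f s t $$ (- j) = fls_at g s t $$ (- j)" using assms(3) by simp
  then show "f j s t = g j s t" using assms(1,2) by (simp add: fls_at_nth)
qed

lemma deg_le_sadd: "deg_le M f \<Longrightarrow> deg_le M g \<Longrightarrow> deg_le M (sadd f g)"
  by (simp add: deg_le_def sadd_def)

lemma deg_le_ssub: "deg_le M f \<Longrightarrow> deg_le M g \<Longrightarrow> deg_le M (ssub f g)"
  by (simp add: deg_le_def ssub_def)

lemma deg_le_cst: "deg_le 0 (cst c)"
  by (simp add: deg_le_def cst_def)

lemma deg_le_sone: "deg_le 0 sone"
  by (simp add: deg_le_def sone_def)

lemma deg_bounded_sadd [simp]: "deg_bounded f \<Longrightarrow> deg_bounded g \<Longrightarrow> deg_bounded (sadd f g)"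
  unfolding deg_bounded_def by (meson max.cobounded1 max.cobounded2 deg_le_mono deg_le_sadd)

lemma deg_bounded_ssub [simp]: "deg_bounded f \<Longrightarrow> deg_bounded g \<Longrightarrow> deg_bounded (ssub f g)"
  unfolding deg_bounded_def by (meson max.cobounded1 max.cobounded2 deg_le_mono deg_le_ssub)

lemma deg_bounded_cst [simp]: "deg_bounded (cst c)"
  using deg_le_cst deg_boundedI by blast

lemma deg_bounded_sone [simp]: "deg_bounded sone"
  using deg_le_sone deg_boundedI by blast

lemma fls_at_sadd [simp]:
  "deg_bounded f \<Longrightarrow> deg_bounded g \<Longrightarrow> fls_at (sadd f g) s t = fls_at f s t + fls_at g s t"
  by (rule fls_eqI) (simp add: fls_at_nth, simp add: sadd_def)

lemma fls_at_ssub [simp]: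
  "deg_bounded f \<Longrightarrow> deg_bounded g \<Longrightarrow> fls_at (ssub f g) s t = fls_at f s t - fls_at g s t"
  by (rule fls_eqI) (simp add: fls_at_nth, simp add: ssub_def)

lemma fls_at_cst [simp]: "fls_at (cst c) s t = fls_const (c s t)"
  by (rule fls_eqI) (simp add: fls_at_nth, simp add: cst_def)

lemma fls_at_sone [simp]: "fls_at sone s t = 1"
  by (rule fls_eqI) (simp add: fls_at_nth, simp add: sone_def)

lemma smul_coeff_eq_sum:
  assumes "deg_le Mf f" "deg_le Mg g"
  shows "smul f g j s t = (\<Sum>i\<in>{j-Mg..Mf}. f i s t * g (j - i) s t)"
  unfolding smul_def
proof (rule sum.mono_neutral_left)
  show "{i. f i s t \<noteq> 0 \<and> g (j - i) s t \<noteq> 0} \<subseteq> {j - Mg..Mf}"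
  proof
    fix x assume "x \<in> {i. f i s t \<noteq> 0 \<and> g (j - i) s t \<noteq> 0}"
    hence x: "f x s t \<noteq> 0" "g (j - x) s t \<noteq> 0" by auto
    have "x \<le> Mf" by (rule ccontr) (use deg_leD[OF assms(1)] x in auto)
    moreover have "j - x \<le> Mg" by (rule ccontr) (use deg_leD[OF assms(2)] x in auto)
    ultimately show "x \<in> {j - Mg..Mf}" by auto
  qed
qed auto

lemma smul_eq_sum:
  "deg_le Mf f \<Longrightarrow> deg_le Mg g \<Longrightarrow> smul f g j = (\<lambda>s t. \<Sum>i\<in>{j-Mg..Mf}. f i s t * g (j - i) s t)"
  by (intro ext) (rule smul_coeff_eq_sum)

lemma deg_le_smul: "deg_le Mf f \<Longrightarrow> deg_le Mg g \<Longrightarrow> deg_le (Mf + Mg) (smul f g)"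
  unfolding deg_le_def[of "Mf + Mg"] by (simp add: smul_coeff_eq_sum)

lemma deg_bounded_smul [simp]: "deg_bounded f \<Longrightarrow> deg_bounded g \<Longrightarrow> deg_bounded (smul f g)"
  unfolding deg_bounded_def using deg_le_smul by blast

lemma fls_times_nth_eq_sum:
  fixes u w :: "'a::comm_ring fls"
  assumes "finite A" "\<And>l. u $$ l \<noteq> 0 \<Longrightarrow> w $$ (n - l) \<noteq> 0 \<Longrightarrow> l \<in> A"
  shows "(u * w) $$ n = (\<Sum>l\<in>A. u $$ l * w $$ (n - l))"
proof -
  let ?I = "{fls_subdegree u..n - fls_subdegree w}"
  have "(u * w) $$ n = (\<Sum>l\<in>?I. u $$ l * w $$ (n - l))"
    by (rule fls_times_nth(2))
  also have "\<dots> = (\<Sum>l\<in>?I \<union> A. u $$ l * w $$ (n - l))"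
    by (rule sum.mono_neutral_left) (use assms in auto)
  also have "\<dots> = (\<Sum>l\<in>A. u $$ l * w $$ (n - l))"
  proof (rule sum.mono_neutral_right)
    show "\<forall>i\<in>?I \<union> A - A. u $$ i * w $$ (n - i) = 0" using assms(2) by force
  qed (use assms in auto)
  finally show ?thesis .
qed

lemma fls_at_smul [simp]:
  assumes "deg_bounded f" "deg_bounded g"
  shows "fls_at (smul f g) s t = fls_at f s t * fls_at g s t"
proof (rule fls_eqI)
  obtain Mf Mg where M: "deg_le Mf f" "deg_le Mg g"
    using assms by (auto simp: deg_bounded_def)
  fix n
  have "fls_at (smul f g) s t $$ n = (\<Sum>i\<in>{-n-Mg..Mf}. f i s t * g (-n - i) s t)"
    using assms by (simp add: fls_at_nth smul_coeff_eq_sum[OF M])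
  also have "\<dots> = (\<Sum>l\<in>{-Mf..n+Mg}. f (-l) s t * g (-(n - l)) s t)"
    by (rule sum.reindex_bij_witness[of _ uminus uminus]) auto
  also have "\<dots> = (fls_at f s t * fls_at g s t) $$ n"
  proof (subst fls_times_nth_eq_sum[where A = "{-Mf..n+Mg}"])
    fix l assume l: "fls_at f s t $$ l \<noteq> 0" "fls_at g s t $$ (n - l) \<noteq> 0"
    have "-l \<le> Mf"
      by (rule ccontr) (use deg_leD[OF M(1)] l assms in \<open>auto simp: fls_at_nth\<close>)
    moreover have "-(n-l) \<le> Mg"
      by (rule ccontr) (use deg_leD[OF M(2)] l assms in \<open>auto simp: fls_at_nth\<close>)
    ultimately show "l \<in> {-Mf..n+Mg}" by auto
  qed (use assms in \<open>simp_all add: fls_at_nth\<close>)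
  finally show "fls_at (smul f g) s t $$ n = (fls_at f s t * fls_at g s t) $$ n" .
qed

lemma smul_cst: "smul (cst c) f j s t = c s t * f j s t"
proof -
  have "smul (cst c) f j s t = (\<Sum>i\<in>{0}. cst c i s t * f (j - i) s t)"
    unfolding smul_def by (rule sum.mono_neutral_left) (auto simp: cst_def)
  then show ?thesis by (simp add: cst_def)
qed

lemma spow_0 [simp]: "spow f 0 = sone"
  by (simp add: spow_def)

lemma spow_Suc: "spow f (Suc n) = smul f (spow f n)"
  by (simp add: spow_def)

lemma deg_le_spow: "deg_le M f \<Longrightarrow> deg_le (int n * M) (spow f n)"
proof (induction n)
  case 0
  then show ?case using deg_le_sone by simp
next
  case (Suc n)
  then have "deg_le (M + int n * M) (smul f (spow f n))" by (intro deg_le_smul)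
  then show ?case by (simp add: spow_Suc algebra_simps)
qed

lemma deg_bounded_spow [simp]: "deg_bounded f \<Longrightarrow> deg_bounded (spow f n)"
  using deg_le_spow deg_boundedI unfolding deg_bounded_def by blast

lemma fls_at_spow [simp]: "deg_bounded f \<Longrightarrow> fls_at (spow f n) s t = fls_at f s t ^ n"
  by (induction n) (simp_all add: spow_Suc)

text \<open>Since \<open>X = k\<^sup>-\<^sup>1\<close>, the derivative in \<open>k\<close> is \<open>-X\<^sup>2 d/dX\<close>.\<close>

definition fls_dk :: "real fls \<Rightarrow> real fls" where
  "fls_dk F = - fls_shift (-2) (fls_deriv F)"

lemma fls_dk_nth [simp]: "fls_dk F $$ i = of_int (1 - i) * F $$ (i - 1)"
  by (simp add: fls_dk_def algebra_simps)

lemma fls_dk_add [simp]: "fls_dk (F + G) = fls_dk F + fls_dk G"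
  by (rule fls_eqI) (simp add: algebra_simps)

lemma fls_dk_diff [simp]: "fls_dk (F - G) = fls_dk F - fls_dk G"
  by (rule fls_eqI) (simp add: algebra_simps)

lemma fls_dk_const [simp]: "fls_dk (fls_const c) = 0"
  by (rule fls_eqI) simp

lemma fls_dk_one [simp]: "fls_dk 1 = 0"
  using fls_dk_const[of 1] by simp

lemma fls_dk_mult [simp]: "fls_dk (F * G) = fls_dk F * G + F * fls_dk G"
proof -
  have "fls_shift (-2) (fls_deriv F * G) = fls_shift (-2) (fls_deriv F) * G"
    "fls_shift (-2) (F * fls_deriv G) = F * fls_shift (-2) (fls_deriv G)"
    by (metis fls_shifted_times_simps)+
  then show ?thesis by (simp add: fls_dk_def algebra_simps fls_shift_plus)
qed

lemma fls_dk_power: "fls_dk (F ^ n) = of_nat n * F ^ (n - 1) * fls_dk F"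
proof (induction n)
  case (Suc n)
  then show ?case by (cases n) (simp_all add: algebra_simps)
qed simp

lemma deg_le_dk: "deg_le M f \<Longrightarrow> deg_le (M - 1) (dk f)"
  by (simp add: deg_le_def dk_def)

lemma deg_bounded_dk [simp]: "deg_bounded f \<Longrightarrow> deg_bounded (dk f)"
  using deg_le_dk deg_boundedI unfolding deg_bounded_def by blast

lemma fls_at_dk [simp]: "deg_bounded f \<Longrightarrow> fls_at (dk f) s t = fls_dk (fls_at f s t)"
  by (rule fls_eqI) (simp add: fls_at_nth, simp add: dk_def algebra_simps)

lemma deg_le_sd: "deg_le M f \<Longrightarrow> deg_le M (sd v f)"
proof -
  assume "deg_le M f"
  then have "f j = (\<lambda>s t. 0)" if "M < j" for j
    using that by (auto simp: deg_le_def fun_eq_iff)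
  then show ?thesis by (simp add: deg_le_def sd_def)
qed

lemma deg_bounded_sd [simp]: "deg_bounded f \<Longrightarrow> deg_bounded (sd v f)"
  using deg_le_sd deg_boundedI unfolding deg_bounded_def by blast

lemma deg_bounded_zero [simp]: "deg_bounded (\<lambda>j s t. 0)"
  by (auto simp: deg_bounded_def deg_le_def)

lemma fls_at_zero [simp]: "fls_at (\<lambda>j s t. 0) s t = 0"
  by (rule fls_eqI) (simp add: fls_at_nth)

lemma ser_pdiff_sadd [simp]: "ser_pdiff v f \<Longrightarrow> ser_pdiff v g \<Longrightarrow> ser_pdiff v (sadd f g)"
  by (auto simp: ser_pdiff_def sadd_def)

lemma ser_pdiff_ssub [simp]: "ser_pdiff v f \<Longrightarrow> ser_pdiff v g \<Longrightarrow> ser_pdiff v (ssub f g)"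
  by (auto simp: ser_pdiff_def ssub_def)

lemma ser_pdiff_cst [simp]: "pdiff v c \<Longrightarrow> ser_pdiff v (cst c)"
  by (auto simp: ser_pdiff_def cst_def)

lemma ser_pdiff_sone [simp]: "ser_pdiff v sone"
  by (auto simp: ser_pdiff_def sone_def)

lemma ser_pdiff_dk [simp]: "ser_pdiff v f \<Longrightarrow> ser_pdiff v (dk f)"
  by (auto simp: ser_pdiff_def dk_def)

lemma ser_pdiff_smul [simp]:
  assumes "deg_bounded f" "deg_bounded g" "ser_pdiff v f" "ser_pdiff v g"
  shows "ser_pdiff v (smul f g)"
proof -
  obtain Mf Mg where M: "deg_le Mf f" "deg_le Mg g"
    using assms by (auto simp: deg_bounded_def)
  show ?thesis
    using assms(3,4) unfolding ser_pdiff_def smul_eq_sum[OF M] by (intro allI pdiff_sum) auto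
qed

lemma ser_pdiff_spow [simp]: "deg_bounded f \<Longrightarrow> ser_pdiff v f \<Longrightarrow> ser_pdiff v (spow f n)"
  by (induction n) (simp_all add: spow_Suc)

lemma sd_sadd [simp]:
  "ser_pdiff v f \<Longrightarrow> ser_pdiff v g \<Longrightarrow> sd v (sadd f g) = sadd (sd v f) (sd v g)"
  by (auto simp: ser_pdiff_def sadd_def sd_def pd_add)

lemma sd_ssub [simp]:
  "ser_pdiff v f \<Longrightarrow> ser_pdiff v g \<Longrightarrow> sd v (ssub f g) = ssub (sd v f) (sd v g)"
  by (auto simp: ser_pdiff_def ssub_def sd_def pd_diff)

lemma sd_cst [simp]: "sd v (cst c) = cst (pd v c)"
  by (auto simp: sd_def cst_def)

lemma sd_sone [simp]: "sd v sone = (\<lambda>j s t. 0)"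
  by (auto simp: sd_def sone_def)

lemma sd_dk [simp]: "ser_pdiff v f \<Longrightarrow> sd v (dk f) = dk (sd v f)"
  by (auto simp: ser_pdiff_def dk_def sd_def pd_cmult)

lemma sd_smul [simp]:
  assumes "deg_bounded f" "deg_bounded g" "ser_pdiff v f" "ser_pdiff v g"
  shows "sd v (smul f g) = sadd (smul (sd v f) g) (smul f (sd v g))"
proof (intro ext)
  fix j s t
  obtain Mf Mg where M: "deg_le Mf f" "deg_le Mg g"
    using assms by (auto simp: deg_bounded_def)
  have d: "\<And>i. pdiff v (f i)" "\<And>i. pdiff v (g i)"
    using assms(3,4) by (auto simp: ser_pdiff_def)
  have "sd v (smul f g) j s t = pd v (\<lambda>s t. \<Sum>i\<in>{j-Mg..Mf}. f i s t * g (j - i) s t) s t"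
    by (simp add: sd_def smul_eq_sum[OF M])
  also have "\<dots> = (\<Sum>i\<in>{j-Mg..Mf}. pd v (f i) s t * g (j - i) s t + f i s t * pd v (g (j - i)) s t)"
    by (subst pd_sum) (use d in \<open>auto simp: pd_mult\<close>)
  also have "\<dots> = sadd (smul (sd v f) g) (smul f (sd v g)) j s t"
    by (simp only: sadd_def smul_coeff_eq_sum[OF deg_le_sd[OF M(1)] M(2)]
        smul_coeff_eq_sum[OF M(1) deg_le_sd[OF M(2)]]) (simp add: sum.distrib sd_def)
  finally show "sd v (smul f g) j s t = sadd (smul (sd v f) g) (smul f (sd v g)) j s t" .
qed

lemma fls_at_sd_spow:
  assumes "deg_bounded f" "ser_pdiff v f"
  shows "fls_at (sd v (spow f n)) s t = of_nat n * fls_at f s t ^ (n - 1) * fls_at (sd v f) s t"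
proof (induction n)
  case (Suc n)
  then show ?case using assms by (cases n) (simp_all add: spow_Suc algebra_simps)
qed simp

section \<open>The substitution \<open>k \<mapsto> k - a\<close>\<close>

definition gbin :: "int \<Rightarrow> int \<Rightarrow> real" where
  "gbin m r = (if 0 \<le> r then (of_int m gchoose nat r) else 0)"

text \<open>The coefficient of \<open>k\<^sup>j\<close> in \<open>\<Sum>\<^sub>m\<^sub>\<le>\<^sub>M F m (k + b)\<^sup>m\<close>.\<close>

definition shift_coeff :: "real \<Rightarrow> int \<Rightarrow> (int \<Rightarrow> real) \<Rightarrow> int \<Rightarrow> real" where
  "shift_coeff b M F j = (\<Sum>m\<in>{j..M}. F m * gbin m (m - j) * b ^ nat (m - j))"

lemma gbin_Vandermonde:
  assumes "j \<le> m + n"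
  shows "(\<Sum>i\<in>{j-n..m}. gbin m (m - i) * gbin n (n - (j - i))) = gbin (m + n) (m + n - j)"
proof -
  let ?N = "nat (m + n - j)"
  have "(\<Sum>i\<in>{j-n..m}. gbin m (m - i) * gbin n (n - (j - i)))
      = (\<Sum>k\<in>{0..?N}. (of_int m gchoose k) * (of_int n gchoose (?N - k)))"
  proof (rule sum.reindex_bij_witness[of _ "\<lambda>k. m - int k" "\<lambda>i. nat (m - i)"])
    fix i assume i: "i \<in> {j-n..m}"
    then have "nat (n - (j - i)) = ?N - nat (m - i)" using assms by auto
    then show "(of_int m gchoose nat (m - i)) * (of_int n gchoose (?N - nat (m - i))) =
       gbin m (m - i) * gbin n (n - (j - i))" using i by (simp add: gbin_def)
  qed (use assms in auto)
  also have "\<dots> = (of_int (m + n) gchoose ?N)"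
    by (subst gbinomial_Vandermonde) simp
  finally show ?thesis using assms by (simp add: gbin_def)
qed

lemma binomial_expansion_mult:
  assumes "j \<le> m + n"
  shows "(\<Sum>i\<in>{j-n..m}. gbin m (m - i) * b ^ nat (m - i) * (gbin n (n - (j - i)) * b ^ nat (n - (j - i))))
    = gbin (m + n) (m + n - j) * b ^ nat (m + n - j)"
proof -
  have "(\<Sum>i\<in>{j-n..m}. gbin m (m - i) * b ^ nat (m - i) * (gbin n (n - (j - i)) * b ^ nat (n - (j - i))))
      = (\<Sum>i\<in>{j-n..m}. b ^ nat (m + n - j) * (gbin m (m - i) * gbin n (n - (j - i))))"
  proof (rule sum.cong[OF refl])
    fix i assume "i \<in> {j-n..m}"
    then have "nat (m + n - j) = nat (m - i) + nat (n - (j - i))" by auto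
    then show "gbin m (m - i) * b ^ nat (m - i) * (gbin n (n - (j - i)) * b ^ nat (n - (j - i)))
        = b ^ nat (m + n - j) * (gbin m (m - i) * gbin n (n - (j - i)))"
      by (simp add: power_add)
  qed
  then show ?thesis by (simp add: sum_distrib_left[symmetric] gbin_Vandermonde[OF assms])
qed

lemma shift_coeff_convolution:
  "shift_coeff b (Mf + Mg) (\<lambda>q. \<Sum>m\<in>{q-Mg..Mf}. F m * G (q - m)) j
   = (\<Sum>(m,n)\<in>Sigma {j-Mg..Mf} (\<lambda>m. {j-m..Mg}). F m * G n * (gbin (m + n) (m + n - j) * b ^ nat (m + n - j)))"
proof -
  have "shift_coeff b (Mf + Mg) (\<lambda>q. \<Sum>m\<in>{q-Mg..Mf}. F m * G (q - m)) j
      = (\<Sum>(q,m)\<in>Sigma {j..Mf+Mg} (\<lambda>q. {q-Mg..Mf}). F m * G (q - m) * (gbin q (q - j) * b ^ nat (q - j)))"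
    by (subst sum.Sigma[symmetric]) (auto simp: shift_coeff_def sum_distrib_right mult.assoc)
  also have "\<dots> = (\<Sum>(m,n)\<in>Sigma {j-Mg..Mf} (\<lambda>m. {j-m..Mg}). F m * G n * (gbin (m + n) (m + n - j) * b ^ nat (m + n - j)))"
    by (rule sum.reindex_bij_witness[of _ "\<lambda>(m,n). (m + n, m)" "\<lambda>(q,m). (m, q - m)"]) auto
  finally show ?thesis .
qed

lemma shift_coeff_product:
  "(\<Sum>i\<in>{j-Mg..Mf}. shift_coeff b Mf F i * shift_coeff b Mg G (j - i))
   = (\<Sum>(m,n)\<in>Sigma {j-Mg..Mf} (\<lambda>m. {j-m..Mg}). F m * G n * (gbin (m + n) (m + n - j) * b ^ nat (m + n - j)))"
proof -
  define D where "D = Sigma {j-Mg..Mf} (\<lambda>m. {j-m..Mg})"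
  define h where "h = (\<lambda>i m n. F m * G n *
    (gbin m (m - i) * b ^ nat (m - i) * (gbin n (n - (j - i)) * b ^ nat (n - (j - i)))))"
  have "(\<Sum>i\<in>{j-Mg..Mf}. shift_coeff b Mf F i * shift_coeff b Mg G (j - i))
      = (\<Sum>i\<in>{j-Mg..Mf}. \<Sum>(m,n)\<in>Sigma {i..Mf} (\<lambda>_. {j-i..Mg}). h i m n)"
    by (intro sum.cong refl) (simp add: shift_coeff_def h_def sum_product sum.cartesian_product ac_simps)
  also have "\<dots> = (\<Sum>(i,mn)\<in>Sigma {j-Mg..Mf} (\<lambda>i. Sigma {i..Mf} (\<lambda>_. {j-i..Mg})). h i (fst mn) (snd mn))"
    by (subst sum.Sigma) (auto simp: case_prod_beta)
  also have "\<dots> = (\<Sum>(mn,i)\<in>Sigma D (\<lambda>(m,n). {j-n..m}). h i (fst mn) (snd mn))"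
    by (rule sum.reindex_bij_witness[of _ "\<lambda>(mn,i). (i,mn)" "\<lambda>(i,mn). (mn,i)"]) (auto simp: D_def)
  also have "\<dots> = (\<Sum>mn\<in>D. \<Sum>i\<in>(\<lambda>(m,n). {j-n..m}) mn. h i (fst mn) (snd mn))"
    by (subst sum.Sigma) (auto simp: D_def case_prod_beta)
  also have "\<dots> = (\<Sum>(m,n)\<in>D. F m * G n * (gbin (m + n) (m + n - j) * b ^ nat (m + n - j)))"
  proof (rule sum.cong[OF refl])
    fix mn assume "mn \<in> D"
    moreover obtain m n where mn: "mn = (m, n)" by fastforce
    ultimately have "j \<le> m + n" by (auto simp: D_def)
    then show "(\<Sum>i\<in>(\<lambda>(m,n). {j-n..m}) mn. h i (fst mn) (snd mn))
        = (case mn of (m, n) \<Rightarrow> F m * G n * (gbin (m + n) (m + n - j) * b ^ nat (m + n - j)))"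
      by (simp add: mn h_def sum_distrib_left[symmetric] binomial_expansion_mult)
  qed
  finally show ?thesis by (simp add: D_def)
qed

lemma shift_coeff_mult:
  "shift_coeff b (Mf + Mg) (\<lambda>q. \<Sum>m\<in>{q-Mg..Mf}. F m * G (q - m)) j
   = (\<Sum>i\<in>{j-Mg..Mf}. shift_coeff b Mf F i * shift_coeff b Mg G (j - i))"
  by (simp only: shift_coeff_convolution shift_coeff_product)

lemma gbin_absorption: "0 \<le> r \<Longrightarrow> of_int (r + 1) * gbin m (r + 1) = of_int m * gbin (m - 1) r"
proof -
  assume r: "0 \<le> r"
  then have "nat (r + 1) = Suc (nat r)" "real (Suc (nat r)) = of_int (r + 1)" by auto
  with r gbinomial_absorption[of "nat r" "of_int m :: real"] show ?thesis
    by (simp add: gbin_def ac_simps)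
qed

lemma gbin_absorb_comp: "0 \<le> r \<Longrightarrow> of_int (m - r) * gbin m r = of_int m * gbin (m - 1) r"
  using gbinomial_absorb_comp[of "of_int m :: real" "nat r"] by (simp add: gbin_def)

lemma shift_coeff_dk_reindex:
  "shift_coeff b (M - 1) (\<lambda>m. of_int (m + 1) * F (m + 1)) j
   = (\<Sum>m\<in>{j+1..M}. F m * of_int m * gbin (m - 1) (m - 1 - j) * b ^ nat (m - 1 - j))"
  unfolding shift_coeff_def
  by (rule sum.reindex_bij_witness[of _ "\<lambda>m. m - 1" "\<lambda>m. m + 1"]) (auto simp: algebra_simps)

lemma shift_coeff_dk_eq:
  "of_int (j + 1) * shift_coeff b M F (j + 1)
   = (\<Sum>m\<in>{j+1..M}. F m * of_int m * gbin (m - 1) (m - 1 - j) * b ^ nat (m - 1 - j))"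
  unfolding shift_coeff_def sum_distrib_left
proof (rule sum.cong[OF refl])
  fix m assume "m \<in> {j+1..M}"
  then have k: "of_int (j + 1) * gbin m (m - 1 - j) = of_int m * gbin (m - 1) (m - 1 - j)"
    using gbin_absorb_comp[of "m - 1 - j" m] by (simp add: add.commute)
  have e: "m - (j + 1) = m - 1 - j" by simp
  have "of_int (j + 1) * (F m * gbin m (m - (j + 1)) * b ^ nat (m - (j + 1)))
      = F m * (of_int (j + 1) * gbin m (m - 1 - j)) * b ^ nat (m - 1 - j)"
    by (simp only: e) (simp add: ac_simps)
  also have "\<dots> = F m * of_int m * gbin (m - 1) (m - 1 - j) * b ^ nat (m - 1 - j)"
    by (simp only: k mult.assoc)
  finally show "of_int (j + 1) * (F m * gbin m (m - (j + 1)) * b ^ nat (m - (j + 1))) =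
      F m * of_int m * gbin (m - 1) (m - 1 - j) * b ^ nat (m - 1 - j)" .
qed

lemma shift_coeff_deriv_eq:
  "(\<Sum>m\<in>{j..M}. F m * gbin m (m - j) * (of_nat (nat (m - j)) * b ^ (nat (m - j) - 1)))
   = (\<Sum>m\<in>{j+1..M}. F m * of_int m * gbin (m - 1) (m - 1 - j) * b ^ nat (m - 1 - j))"
proof -
  have "(\<Sum>m\<in>{j..M}. F m * gbin m (m - j) * (of_nat (nat (m - j)) * b ^ (nat (m - j) - 1)))
      = (\<Sum>m\<in>{j+1..M}. F m * gbin m (m - j) * (of_nat (nat (m - j)) * b ^ (nat (m - j) - 1)))"
    by (rule sum.mono_neutral_right) auto
  also have "\<dots> = (\<Sum>m\<in>{j+1..M}. F m * of_int m * gbin (m - 1) (m - 1 - j) * b ^ nat (m - 1 - j))"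
  proof (rule sum.cong[OF refl])
    fix m assume m: "m \<in> {j+1..M}"
    have k: "of_int (m - j) * gbin m (m - j) = of_int m * gbin (m - 1) (m - 1 - j)"
      using gbin_absorption[of "m - 1 - j" m] m by simp
    have e: "nat (m - j) - 1 = nat (m - 1 - j)" "real (nat (m - j)) = of_int (m - j)"
      using m by auto
    have "F m * gbin m (m - j) * (of_nat (nat (m - j)) * b ^ (nat (m - j) - 1))
        = F m * (of_int (m - j) * gbin m (m - j)) * b ^ nat (m - 1 - j)"
      by (simp only: e) (simp add: ac_simps)
    also have "\<dots> = F m * of_int m * gbin (m - 1) (m - 1 - j) * b ^ nat (m - 1 - j)"
      by (simp only: k mult.assoc)
    finally show "F m * gbin m (m - j) * (of_nat (nat (m - j)) * b ^ (nat (m - j) - 1)) =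
        F m * of_int m * gbin (m - 1) (m - 1 - j) * b ^ nat (m - 1 - j)" .
  qed
  finally show ?thesis .
qed

lemma sshift_eq_shift_coeff:
  assumes "deg_le M f"
  shows "sshift a f j s t = shift_coeff (- a s t) M (\<lambda>m. f m s t) j"
  unfolding sshift_def shift_coeff_def
proof (rule sum.mono_neutral_cong_left)
  show "{m. j \<le> m \<and> f m s t \<noteq> 0} \<subseteq> {j..M}"
    using deg_leD[OF assms] by (force simp: not_less[symmetric])
qed (auto simp: gbin_def)

lemma sshift_eq_sum:
  "deg_le M f \<Longrightarrow>
    sshift a f j = (\<lambda>s t. \<Sum>m\<in>{j..M}. f m s t * gbin m (m - j) * (- a s t) ^ nat (m - j))"
  by (intro ext) (simp add: sshift_eq_shift_coeff shift_coeff_def)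

lemma deg_le_sshift: "deg_le M f \<Longrightarrow> deg_le M (sshift a f)"
  by (auto simp: deg_le_def sshift_eq_shift_coeff[of M f] shift_coeff_def)

lemma deg_bounded_sshift [simp]: "deg_bounded f \<Longrightarrow> deg_bounded (sshift a f)"
  using deg_le_sshift unfolding deg_bounded_def by blast

lemma sshift_smul:
  assumes "deg_bounded f" "deg_bounded g"
  shows "sshift a (smul f g) = smul (sshift a f) (sshift a g)"
proof (intro ext)
  fix j s t
  obtain Mf Mg where M: "deg_le Mf f" "deg_le Mg g"
    using assms by (auto simp: deg_bounded_def)
  have "sshift a (smul f g) j s t
      = shift_coeff (- a s t) (Mf + Mg) (\<lambda>q. \<Sum>m\<in>{q-Mg..Mf}. f m s t * g (q - m) s t) j"
    using sshift_eq_shift_coeff[OF deg_le_smul[OF M]] smul_coeff_eq_sum[OF M] by simp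
  also have "\<dots> = (\<Sum>i\<in>{j-Mg..Mf}. shift_coeff (- a s t) Mf (\<lambda>m. f m s t) i
      * shift_coeff (- a s t) Mg (\<lambda>m. g m s t) (j - i))"
    by (rule shift_coeff_mult)
  also have "\<dots> = smul (sshift a f) (sshift a g) j s t"
    by (simp add: smul_coeff_eq_sum[OF deg_le_sshift[OF M(1)] deg_le_sshift[OF M(2)]]
        sshift_eq_shift_coeff[OF M(1)] sshift_eq_shift_coeff[OF M(2)])
  finally show "sshift a (smul f g) j s t = smul (sshift a f) (sshift a g) j s t" .
qed

lemma sshift_ssub:
  assumes "deg_bounded f" "deg_bounded g"
  shows "sshift a (ssub f g) = ssub (sshift a f) (sshift a g)"
proof (intro ext)
  fix j s t
  obtain M where M: "deg_le M f" "deg_le M g"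
    using assms by (auto simp: deg_bounded_def intro: deg_le_mono[OF _ max.cobounded1]
        deg_le_mono[OF _ max.cobounded2])
  have "sshift a (ssub f g) j s t = shift_coeff (- a s t) M (\<lambda>m. ssub f g m s t) j"
    by (rule sshift_eq_shift_coeff[OF deg_le_ssub[OF M]])
  also have "\<dots> = shift_coeff (- a s t) M (\<lambda>m. f m s t) j - shift_coeff (- a s t) M (\<lambda>m. g m s t) j"
    by (simp add: shift_coeff_def ssub_def sum_subtractf[symmetric] algebra_simps)
  finally show "sshift a (ssub f g) j s t = ssub (sshift a f) (sshift a g) j s t"
    by (simp add: ssub_def sshift_eq_shift_coeff[OF M(1)] sshift_eq_shift_coeff[OF M(2)])
qed

lemma sshift_sone: "sshift a sone = sone"
proof (intro ext)
  fix j s t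
  have "sshift a sone j s t = (\<Sum>m\<in>{j..0}. if m = 0 then gbin 0 (- j) * (- a s t) ^ nat (- j) else 0)"
    unfolding sshift_eq_shift_coeff[OF deg_le_sone] shift_coeff_def
    by (rule sum.cong) (auto simp: sone_def)
  also have "\<dots> = sone j s t"
    by (auto simp: sone_def gbin_def gbinomial_0_left)
  finally show "sshift a sone j s t = sone j s t" .
qed

lemma sshift_spow: "deg_bounded f \<Longrightarrow> sshift a (spow f n) = spow (sshift a f) n"
  by (induction n) (simp_all add: sshift_sone spow_Suc sshift_smul)

lemma dk_sshift:
  assumes "deg_bounded f"
  shows "dk (sshift a f) = sshift a (dk f)"
proof (intro ext)
  fix j s t
  obtain M where M: "deg_le M f"
    using assms by (auto simp: deg_bounded_def)
  have "dk (sshift a f) j s t = of_int (j + 1) * shift_coeff (- a s t) M (\<lambda>m. f m s t) (j + 1)"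
    by (simp add: dk_def sshift_eq_shift_coeff[OF M])
  also have "\<dots> = shift_coeff (- a s t) (M - 1) (\<lambda>m. of_int (m + 1) * f (m + 1) s t) j"
    by (simp only: shift_coeff_dk_eq shift_coeff_dk_reindex[of _ _ "\<lambda>m. f m s t"])
  also have "\<dots> = sshift a (dk f) j s t"
    using sshift_eq_shift_coeff[OF deg_le_dk[OF M], of a j s t] by (simp add: dk_def)
  finally show "dk (sshift a f) j s t = sshift a (dk f) j s t" .
qed

lemma pd_mult_power_minus:
  assumes "pdiff v F" "pdiff v a"
  shows "pd v (\<lambda>s t. F s t * c * (- a s t) ^ n) s t
    = pd v F s t * c * (- a s t) ^ n - pd v a s t * (F s t * c * (of_nat n * (- a s t) ^ (n - 1)))"
  using assms by (simp add: pd_mult pd_power pd_minus pd_cmult[of v F c, simplified mult.commute])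

lemma ser_pdiff_sshift [simp]:
  assumes "deg_bounded f" "ser_pdiff v f" "pdiff v a"
  shows "ser_pdiff v (sshift a f)"
proof -
  obtain M where M: "deg_le M f"
    using assms by (auto simp: deg_bounded_def)
  show ?thesis
    using assms(2,3) unfolding ser_pdiff_def sshift_eq_sum[OF M] by (intro allI pdiff_sum) auto
qed

lemma sd_sshift:
  assumes "deg_bounded f" "ser_pdiff v f" "pdiff v a"
  shows "sd v (sshift a f) = ssub (sshift a (sd v f)) (smul (cst (pd v a)) (sshift a (dk f)))"
proof (intro ext)
  fix j s t
  obtain M where M: "deg_le M f"
    using assms by (auto simp: deg_bounded_def)
  have df: "\<And>m. pdiff v (f m)"
    using assms(2) by (auto simp: ser_pdiff_def)
  let ?b = "- a s t"
  have "sd v (sshift a f) j s t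
      = (\<Sum>m\<in>{j..M}. pd v (\<lambda>s t. f m s t * gbin m (m - j) * (- a s t) ^ nat (m - j)) s t)"
    by (simp add: sd_def sshift_eq_sum[OF M] pd_sum df assms(3))
  also have "\<dots> = (\<Sum>m\<in>{j..M}. pd v (f m) s t * gbin m (m - j) * ?b ^ nat (m - j))
      - pd v a s t * (\<Sum>m\<in>{j..M}. f m s t * gbin m (m - j) * (of_nat (nat (m - j)) * ?b ^ (nat (m - j) - 1)))"
    by (simp add: pd_mult_power_minus[OF df assms(3)] sum_subtractf sum_distrib_left)
  also have "(\<Sum>m\<in>{j..M}. f m s t * gbin m (m - j) * (of_nat (nat (m - j)) * ?b ^ (nat (m - j) - 1)))
      = shift_coeff ?b (M - 1) (\<lambda>m. of_int (m + 1) * f (m + 1) s t) j"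
    by (simp only: shift_coeff_deriv_eq shift_coeff_dk_reindex[of _ _ "\<lambda>m. f m s t"])
  also have "\<dots> = sshift a (dk f) j s t"
    using sshift_eq_shift_coeff[OF deg_le_dk[OF M], of a j s t] by (simp add: dk_def)
  also have "(\<Sum>m\<in>{j..M}. pd v (f m) s t * gbin m (m - j) * ?b ^ nat (m - j)) = sshift a (sd v f) j s t"
    using sshift_eq_shift_coeff[OF deg_le_sd[OF M, of v], of a j s t] by (simp add: shift_coeff_def sd_def)
  finally show "sd v (sshift a f) j s t
      = ssub (sshift a (sd v f)) (smul (cst (pd v a)) (sshift a (dk f))) j s t"
    by (simp add: ssub_def smul_cst)
qed

section \<open>The derivatives of \<open>log \<P>\<close>\<close>

definition vanishes_below :: "int \<Rightarrow> real fls \<Rightarrow> bool" where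
  "vanishes_below A F \<longleftrightarrow> (\<forall>i<A. F $$ i = 0)"

lemma vanishes_belowD: "vanishes_below A F \<Longrightarrow> i < A \<Longrightarrow> F $$ i = 0"
  by (simp add: vanishes_below_def)

lemma vanishes_below_mono: "vanishes_below A F \<Longrightarrow> B \<le> A \<Longrightarrow> vanishes_below B F"
  by (simp add: vanishes_below_def)

lemma vanishes_below_one: "vanishes_below 0 1"
  by (simp add: vanishes_below_def)

lemma vanishes_below_add: "vanishes_below A F \<Longrightarrow> vanishes_below A G \<Longrightarrow> vanishes_below A (F + G)"
  by (simp add: vanishes_below_def)

lemma vanishes_below_uminus: "vanishes_below A F \<Longrightarrow> vanishes_below A (- F)"
  by (simp add: vanishes_below_def)

lemma vanishes_below_dk: "vanishes_below A F \<Longrightarrow> vanishes_below (A + 1) (fls_dk F)"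
  by (simp add: vanishes_below_def)

lemma vanishes_below_mult:
  assumes "vanishes_below A F" "vanishes_below B G"
  shows "vanishes_below (A + B) (F * G)"
proof (cases "F = 0 \<or> G = 0")
  case False
  then have "A \<le> fls_subdegree F" "B \<le> fls_subdegree G"
    using assms by (auto intro!: fls_subdegree_geI simp: vanishes_below_def)
  then show ?thesis unfolding vanishes_below_def by (auto intro!: fls_times_nth_eq0)
qed (auto simp: vanishes_below_def)

lemma vanishes_below_power: "vanishes_below A F \<Longrightarrow> vanishes_below (int n * A) (F ^ n)"
proof (induction n)
  case 0
  then show ?case using vanishes_below_one by simp
next
  case (Suc n)
  then have "vanishes_below (A + int n * A) (F * F ^ n)" by (intro vanishes_below_mult)
  then show ?case by (simp add: algebra_simps)
qed

lemma one_plus_mult_geometric_sum: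
  fixes q w :: "real fls"
  shows "(1 + q) * (\<Sum>m\<in>{1..M}. (-1) ^ (m + 1) * q ^ (m - 1) * w) = w - w * (- q) ^ M"
proof (induction M)
  case (Suc M)
  have "(1 + q) * (\<Sum>m\<in>{1..Suc M}. (-1) ^ (m + 1) * q ^ (m - 1) * w)
      = (1 + q) * (\<Sum>m\<in>{1..M}. (-1) ^ (m + 1) * q ^ (m - 1) * w)
        + (1 + q) * ((-1) ^ (M + 2) * q ^ M * w)"
    by (simp add: algebra_simps)
  also have "(-1) ^ (M + 2) * q ^ M = (- q) ^ M"
    by (simp add: power_minus')
  also have "(1 + q) * ((- q) ^ M * w) = w * (- q) ^ M - w * (- q) ^ Suc M"
    by (simp add: algebra_simps)
  finally show ?case using Suc by (simp add: algebra_simps)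
qed simp

text \<open>\<open>Y\<close> is the expansion of \<open>w / (1 + q)\<close> in powers of \<open>X\<close>.\<close>

lemma one_plus_mult_geometric_eq:
  fixes q w Y :: "real fls"
  assumes q: "vanishes_below 1 q" and w: "vanishes_below 1 w"
    and Y: "\<And>M i. i \<le> int M \<Longrightarrow> Y $$ i = (\<Sum>m\<in>{1..M}. (-1) ^ (m + 1) * q ^ (m - 1) * w) $$ i"
  shows "(1 + q) * Y = w"
proof (rule fls_eqI)
  fix i
  define M where "M = nat i"
  define T where "T = (\<Sum>m\<in>{1..M}. (-1) ^ (m + 1) * q ^ (m - 1) * w)"
  have "vanishes_below (int M + 1) (Y - T)"
    unfolding vanishes_below_def using Y[of _ M] by (simp add: T_def)
  then have "vanishes_below (0 + (int M + 1)) ((1 + q) * (Y - T))"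
    using q by (intro vanishes_below_mult vanishes_below_add vanishes_below_one)
       (auto elim: vanishes_below_mono)
  then have "((1 + q) * (Y - T)) $$ i = 0"
    by (rule vanishes_belowD) (simp add: M_def)
  moreover have "vanishes_below (1 + int M * 1) (w * (- q) ^ M)"
    by (intro vanishes_below_mult w vanishes_below_power vanishes_below_uminus q)
  then have "(w * (- q) ^ M) $$ i = 0"
    by (rule vanishes_belowD) (simp add: M_def)
  moreover have "(1 + q) * Y = (1 + q) * (Y - T) + (1 + q) * T"
    by (simp add: algebra_simps)
  moreover have "(1 + q) * T = w - w * (- q) ^ M"
    by (simp only: T_def one_plus_mult_geometric_sum)
  ultimately show "((1 + q) * Y) $$ i = w $$ i" by simp
qed

lemma minus_one_power_mult_nth: "((-1) ^ n * X :: real fls) $$ i = (-1) ^ n * X $$ i"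
  by (simp add: minus_one_power_iff)

text \<open>The form in which the two derivatives of \<open>log (1 + q)\<close> are available.\<close>

lemma one_plus_mult_log_deriv:
  fixes q w Y :: "real fls"
  assumes q: "vanishes_below 1 q" and w: "vanishes_below 1 w"
    and Y: "\<And>i. Y $$ i = (\<Sum>m = 1..nat i. (-1) ^ (m + 1) / real m * (of_nat m * q ^ (m - 1) * w) $$ i)"
  shows "(1 + q) * Y = w"
proof (rule one_plus_mult_geometric_eq[OF q w])
  fix M :: nat and i :: int assume i: "i \<le> int M"
  have "Y $$ i = (\<Sum>m = 1..nat i. (-1) ^ (m + 1) * (q ^ (m - 1) * w) $$ i)"
    unfolding Y by (intro sum.cong refl) (simp add: fls_of_nat mult.assoc)
  also have "\<dots> = (\<Sum>m = 1..M. (-1) ^ (m + 1) * (q ^ (m - 1) * w) $$ i)"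
  proof (rule sum.mono_neutral_left)
    show "\<forall>m\<in>{1..M} - {1..nat i}. (-1) ^ (m + 1) * (q ^ (m - 1) * w) $$ i = 0"
    proof
      fix m assume m: "m \<in> {1..M} - {1..nat i}"
      have "vanishes_below (int (m - 1) * 1 + 1) (q ^ (m - 1) * w)"
        by (intro vanishes_below_mult vanishes_below_power q w)
      then have "(q ^ (m - 1) * w) $$ i = 0"
        using m by (intro vanishes_belowD) auto
      then show "(-1) ^ (m + 1) * (q ^ (m - 1) * w) $$ i = 0" by simp
    qed
  qed (use i in auto)
  also have "\<dots> = (\<Sum>m = 1..M. (-1) ^ (m + 1) * q ^ (m - 1) * w) $$ i"
    by (simp add: fls_nth_sum mult.assoc minus_one_power_mult_nth)
  finally show "Y $$ i = (\<Sum>m = 1..M. (-1) ^ (m + 1) * q ^ (m - 1) * w) $$ i" .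
qed

lemma Qser_eq:
  "Qser N p j = (if - int N \<le> j \<and> j < 0 then (\<lambda>s t. p (nat (- j)) s t / p 0 s t) else (\<lambda>s t. 0))"
  by (auto simp: Qser_def)

lemma polyser_eq: "polyser N p j = (if 0 \<le> j \<and> j \<le> int N then p (N - nat j) else (\<lambda>s t. 0))"
  by (auto simp: polyser_def)

lemma logser_eq:
  "logser N p j = (\<lambda>s t. \<Sum>m = 1..nat (- j). ((-1) ^ (m + 1) / real m) * spow (Qser N p) m j s t)"
  by (simp add: logser_def)

lemma deg_le_Qser: "deg_le (-1) (Qser N p)"
  by (simp add: deg_le_def Qser_def)

lemma deg_le_polyser: "deg_le (int N) (polyser N p)"
  by (simp add: deg_le_def polyser_def)

lemma deg_le_logser: "deg_le (-1) (logser N p)"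
  by (simp add: deg_le_def logser_def)

lemma deg_bounded_Qser [simp]: "deg_bounded (Qser N p)"
  using deg_le_Qser deg_boundedI by blast

lemma deg_bounded_polyser [simp]: "deg_bounded (polyser N p)"
  using deg_le_polyser deg_boundedI by blast

lemma deg_bounded_logser [simp]: "deg_bounded (logser N p)"
  using deg_le_logser deg_boundedI by blast

lemma deg_bounded_dlogP_k [simp]: "deg_bounded (dlogP_k N p)"
  using deg_le_logser[of N p] unfolding deg_bounded_def deg_le_def
  by (auto simp: dlogP_k_def dk_def intro!: exI[of _ "-1"])

lemma deg_bounded_dlogP_v [simp]: "deg_bounded (dlogP_v v N p)"
  using deg_le_sd[OF deg_le_logser[of N p], of v] unfolding deg_bounded_def deg_le_def
  by (auto simp: dlogP_v_def intro!: exI[of _ 0])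

lemma ser_pdiff_Qser [simp]:
  "\<forall>s t. p 0 s t \<noteq> 0 \<Longrightarrow> \<forall>i\<le>N. pdiff v (p i) \<Longrightarrow> ser_pdiff v (Qser N p)"
  unfolding ser_pdiff_def Qser_eq by (auto intro!: pdiff_divide)

lemma ser_pdiff_logser [simp]:
  assumes "\<forall>s t. p 0 s t \<noteq> 0" "\<forall>i\<le>N. pdiff v (p i)"
  shows "ser_pdiff v (logser N p)"
proof -
  have "pdiff v (spow (Qser N p) m j)" for m j
    using assms ser_pdiff_spow[OF deg_bounded_Qser ser_pdiff_Qser] by (simp add: ser_pdiff_def)
  then show ?thesis unfolding ser_pdiff_def logser_eq by (intro allI pdiff_sum pdiff_cmult) auto
qed

lemma ser_pdiff_polyser [simp]: "\<forall>i\<le>N. pdiff v (p i) \<Longrightarrow> ser_pdiff v (polyser N p)"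
  unfolding ser_pdiff_def polyser_eq by auto

lemma fls_at_Qser_nth:
  "fls_at (Qser N p) s t $$ i = (if 1 \<le> i \<and> i \<le> int N then p (nat i) s t / p 0 s t else 0)"
  by (simp only: fls_at_nth[OF deg_bounded_Qser]) (simp add: Qser_def)

lemma vanishes_below_Qser: "vanishes_below 1 (fls_at (Qser N p) s t)"
  by (simp add: vanishes_below_def fls_at_Qser_nth)

lemma fls_at_polyser:
  assumes "\<forall>s t. p 0 s t \<noteq> 0"
  shows "fls_at (polyser N p) s t = fls_const (p 0 s t) * fls_shift (int N) (1 + fls_at (Qser N p) s t)"
proof (rule fls_eqI)
  fix i
  have "N - nat (- i) = nat (i + int N)" if "- int N \<le> i" "i \<le> 0" for i
    using that by auto
  then show "fls_at (polyser N p) s t $$ i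
      = (fls_const (p 0 s t) * fls_shift (int N) (1 + fls_at (Qser N p) s t)) $$ i"
    using assms by (simp only: fls_at_nth[OF deg_bounded_polyser])
      (cases "i = - int N"; auto simp: polyser_def fls_at_Qser_nth)
qed

lemma fls_at_logser_nth:
  "fls_at (logser N p) s t $$ i
    = (\<Sum>m = 1..nat i. (-1) ^ (m + 1) / real m * (fls_at (Qser N p) s t ^ m) $$ i)"
proof -
  have "fls_at (logser N p) s t $$ i
      = (\<Sum>m = 1..nat i. (-1) ^ (m + 1) / real m * spow (Qser N p) m (- i) s t)"
    by (simp only: fls_at_nth[OF deg_bounded_logser]) (simp add: logser_def)
  then show ?thesis
    by (simp add: fls_at_nth[of "spow (Qser N p) _", symmetric])
qed

lemma fls_dk_logser_nth:
  "fls_dk (fls_at (logser N p) s t) $$ i = (\<Sum>m = 1..nat i. (-1) ^ (m + 1) / real m *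
     (of_nat m * fls_at (Qser N p) s t ^ (m - 1) * fls_dk (fls_at (Qser N p) s t)) $$ i)"
proof -
  let ?q = "fls_at (Qser N p) s t"
  have "fls_dk (fls_at (logser N p) s t) $$ i
      = (\<Sum>m = 1..nat (i - 1). (-1) ^ (m + 1) / real m * fls_dk (?q ^ m) $$ i)"
    by (simp only: fls_dk_nth fls_at_logser_nth sum_distrib_left) (simp add: ac_simps)
  also have "\<dots> = (\<Sum>m = 1..nat i. (-1) ^ (m + 1) / real m * fls_dk (?q ^ m) $$ i)"
  proof (rule sum.mono_neutral_left)
    show "\<forall>m\<in>{1..nat i} - {1..nat (i - 1)}. (-1) ^ (m + 1) / real m * fls_dk (?q ^ m) $$ i = 0"
    proof
      fix m assume m: "m \<in> {1..nat i} - {1..nat (i - 1)}"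
      have "vanishes_below (int m * 1 + 1) (fls_dk (?q ^ m))"
        by (intro vanishes_below_dk vanishes_below_power vanishes_below_Qser)
      then have "fls_dk (?q ^ m) $$ i = 0"
        using m by (intro vanishes_belowD) auto
      then show "(-1) ^ (m + 1) / real m * fls_dk (?q ^ m) $$ i = 0" by simp
    qed
  qed auto
  finally show ?thesis by (simp add: fls_dk_power)
qed

lemma fls_at_dlogP_k:
  "fls_at (dlogP_k N p) s t = fls_const (real N) * fls_X + fls_dk (fls_at (logser N p) s t)"
  by (rule fls_eqI) (simp add: fls_at_nth, simp add: dlogP_k_def dk_def algebra_simps)

lemma fls_dk_shift:
  "fls_dk (fls_shift (int N) g) = fls_const (real N) * fls_X * fls_shift (int N) g + fls_shift (int N) (fls_dk g)"
  by (simp only: mult.assoc fls_X_times_conv_shift(1), rule fls_eqI) (simp add: algebra_simps)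

lemma polyser_mult_dlogP_k:
  assumes "\<forall>s t. p 0 s t \<noteq> 0"
  shows "smul (polyser N p) (dlogP_k N p) = dk (polyser N p)"
proof (rule ser_eqI)
  fix s t
  let ?q = "fls_at (Qser N p) s t"
  let ?C = "fls_const (p 0 s t)"
  let ?P = "?C * fls_shift (int N) (1 + ?q)"
  have "(1 + ?q) * fls_dk (fls_at (logser N p) s t) = fls_dk ?q"
    using vanishes_below_mono[OF vanishes_below_dk[OF vanishes_below_Qser], of 1]
    by (intro one_plus_mult_log_deriv vanishes_below_Qser fls_dk_logser_nth) simp
  then have log: "?P * fls_dk (fls_at (logser N p) s t) = ?C * fls_shift (int N) (fls_dk ?q)"
    by (simp only: mult.assoc fls_shifted_times_simps(2))
  have "fls_at (smul (polyser N p) (dlogP_k N p)) s t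
      = ?P * (fls_const (real N) * fls_X + fls_dk (fls_at (logser N p) s t))"
    using assms by (simp add: fls_at_polyser fls_at_dlogP_k)
  also have "\<dots> = ?P * (fls_const (real N) * fls_X) + ?C * fls_shift (int N) (fls_dk ?q)"
    by (simp only: distrib_left log)
  also have "\<dots> = fls_at (dk (polyser N p)) s t"
    using assms by (simp add: fls_at_polyser fls_dk_shift algebra_simps)
  finally show "fls_at (smul (polyser N p) (dlogP_k N p)) s t = fls_at (dk (polyser N p)) s t" .
qed auto

lemma fls_at_sd_Qser_nth:
  "fls_at (sd v (Qser N p)) s t $$ i
   = (if 1 \<le> i \<and> i \<le> int N then pd v (\<lambda>s t. p (nat i) s t / p 0 s t) s t else 0)"
  by (simp only: fls_at_nth[OF deg_bounded_sd[OF deg_bounded_Qser]]) (simp add: sd_def Qser_eq)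

lemma vanishes_below_sd_Qser: "vanishes_below 1 (fls_at (sd v (Qser N p)) s t)"
  by (simp add: vanishes_below_def fls_at_sd_Qser_nth)

lemma fls_at_sd_logser_nth:
  assumes "\<forall>s t. p 0 s t \<noteq> 0" "\<forall>i\<le>N. pdiff v (p i)"
  shows "fls_at (sd v (logser N p)) s t $$ i = (\<Sum>m = 1..nat i. (-1) ^ (m + 1) / real m *
     (of_nat m * fls_at (Qser N p) s t ^ (m - 1) * fls_at (sd v (Qser N p)) s t) $$ i)"
proof -
  have d: "\<And>m j. pdiff v (spow (Qser N p) m j)"
    using ser_pdiff_spow[OF deg_bounded_Qser ser_pdiff_Qser[OF assms]] by (simp add: ser_pdiff_def)
  have "fls_at (sd v (logser N p)) s t $$ i
      = pd v (\<lambda>s t. \<Sum>m = 1..nat i. (-1) ^ (m + 1) / real m * spow (Qser N p) m (- i) s t) s t"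
    by (simp only: fls_at_nth[OF deg_bounded_sd[OF deg_bounded_logser]]) (simp add: sd_def logser_eq)
  also have "\<dots> = (\<Sum>m = 1..nat i. (-1) ^ (m + 1) / real m * pd v (spow (Qser N p) m (- i)) s t)"
  proof -
    have "pd v (\<lambda>s t. \<Sum>m = 1..nat i. (-1) ^ (m + 1) / real m * spow (Qser N p) m (- i) s t)
        = (\<lambda>s t. \<Sum>m = 1..nat i. pd v (\<lambda>s t. (-1) ^ (m + 1) / real m * spow (Qser N p) m (- i) s t) s t)"
      by (rule pd_sum) (simp, rule pdiff_cmult, rule d)
    then show ?thesis by (simp only: pd_cmult[OF d])
  qed
  also have "\<dots> = (\<Sum>m = 1..nat i. (-1) ^ (m + 1) / real m * fls_at (sd v (spow (Qser N p) m)) s t $$ i)"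
    by (simp only: fls_at_nth[OF deg_bounded_sd[OF deg_bounded_spow[OF deg_bounded_Qser]]])
       (simp add: sd_def)
  finally show ?thesis
    by (simp only: fls_at_sd_spow[OF deg_bounded_Qser ser_pdiff_Qser[OF assms]])
qed

lemma fls_at_dlogP_v:
  assumes "\<forall>s t. p 0 s t \<noteq> 0" "pdiff v (p 0)"
  shows "fls_at (dlogP_v v N p) s t
    = fls_const (pd v (p 0) s t / p 0 s t) + fls_at (sd v (logser N p)) s t"
proof (rule fls_eqI)
  fix i
  have "pd v (\<lambda>s t. ln \<bar>p 0 s t\<bar>) = (\<lambda>s t. pd v (p 0) s t / p 0 s t)"
    using pd_ln_abs[OF assms(2)] assms(1) by simp
  then show "fls_at (dlogP_v v N p) s t $$ i
      = (fls_const (pd v (p 0) s t / p 0 s t) + fls_at (sd v (logser N p)) s t) $$ i"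
    by (simp only: fls_at_nth[OF deg_bounded_dlogP_v] fls_plus_nth
        fls_at_nth[OF deg_bounded_sd[OF deg_bounded_logser]]) (simp add: dlogP_v_def)
qed

lemma fls_at_sd_polyser:
  assumes "\<forall>s t. p 0 s t \<noteq> 0" "\<forall>i\<le>N. pdiff v (p i)"
  shows "fls_at (sd v (polyser N p)) s t
    = fls_const (pd v (p 0) s t) * fls_shift (int N) (1 + fls_at (Qser N p) s t)
      + fls_const (p 0 s t) * fls_shift (int N) (fls_at (sd v (Qser N p)) s t)"
proof (rule fls_eqI)
  fix i
  have lhs: "fls_at (sd v (polyser N p)) s t $$ i
      = (if - int N \<le> i \<and> i \<le> 0 then pd v (p (N - nat (- i))) s t else 0)"
    by (simp only: fls_at_nth[OF deg_bounded_sd[OF deg_bounded_polyser]]) (auto simp: sd_def polyser_eq)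
  consider "i = - int N" | "- int N < i \<and> i \<le> 0" | "\<not> (- int N \<le> i \<and> i \<le> 0)"
    by linarith
  then show "fls_at (sd v (polyser N p)) s t $$ i
      = (fls_const (pd v (p 0) s t) * fls_shift (int N) (1 + fls_at (Qser N p) s t)
        + fls_const (p 0 s t) * fls_shift (int N) (fls_at (sd v (Qser N p)) s t)) $$ i"
  proof cases
    case 1
    then show ?thesis using lhs by (simp add: fls_at_Qser_nth fls_at_sd_Qser_nth)
  next
    case 2
    define l where "l = nat (i + int N)"
    have l: "N - nat (- i) = l" "1 \<le> l" "l \<le> N" "i + int N = int l"
      using 2 by (auto simp: l_def)
    have "pdiff v (p l)" "pdiff v (p 0)"
      using assms(2) l by auto
    then have "pd v (\<lambda>s t. p l s t / p 0 s t) s t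
        = (pd v (p l) s t * p 0 s t - p l s t * pd v (p 0) s t) / p 0 s t ^ 2"
      using pd_divide assms(1) by simp
    then show ?thesis
      using 2 l assms(1) by (simp add: lhs fls_at_Qser_nth fls_at_sd_Qser_nth field_simps power2_eq_square)
  next
    case 3
    then show ?thesis by (auto simp: lhs fls_at_Qser_nth fls_at_sd_Qser_nth)
  qed
qed

lemma polyser_mult_dlogP_v:
  assumes "\<forall>s t. p 0 s t \<noteq> 0" "\<forall>i\<le>N. pdiff v (p i)"
  shows "smul (polyser N p) (dlogP_v v N p) = sd v (polyser N p)"
proof (rule ser_eqI)
  fix s t
  let ?q = "fls_at (Qser N p) s t"
  let ?w = "fls_at (sd v (Qser N p)) s t"
  let ?C = "fls_const (p 0 s t)"
  let ?P = "?C * fls_shift (int N) (1 + ?q)"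
  have "(1 + ?q) * fls_at (sd v (logser N p)) s t = ?w"
    by (intro one_plus_mult_log_deriv vanishes_below_Qser vanishes_below_sd_Qser
        fls_at_sd_logser_nth assms)
  then have log: "?P * fls_at (sd v (logser N p)) s t = ?C * fls_shift (int N) ?w"
    by (simp only: mult.assoc fls_shifted_times_simps(2))
  have c: "?C * fls_const (pd v (p 0) s t / p 0 s t) = fls_const (pd v (p 0) s t)"
    using assms(1) by simp
  have "fls_at (smul (polyser N p) (dlogP_v v N p)) s t
      = ?P * (fls_const (pd v (p 0) s t / p 0 s t) + fls_at (sd v (logser N p)) s t)"
    using assms by (simp add: fls_at_polyser fls_at_dlogP_v)
  also have "\<dots> = ?C * fls_const (pd v (p 0) s t / p 0 s t) * fls_shift (int N) (1 + ?q)
      + ?C * fls_shift (int N) ?w"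
    by (simp only: distrib_left log) (simp add: ac_simps)
  also have "\<dots> = fls_at (sd v (polyser N p)) s t"
    by (simp only: c fls_at_sd_polyser[OF assms])
  finally show "fls_at (smul (polyser N p) (dlogP_v v N p)) s t = fls_at (sd v (polyser N p)) s t" .
qed auto

section \<open>The transformed Lax operator and polynomial\<close>

lemma dk_ssub [simp]: "dk (ssub f g) = ssub (dk f) (dk g)"
  by (auto simp: dk_def ssub_def algebra_simps)

lemma dk_cst [simp]: "dk (cst c) = (\<lambda>j s t. 0)"
  by (intro ext) (auto simp: dk_def cst_def)

lemma smul_zero [simp]: "smul f (\<lambda>j s t. 0) = (\<lambda>j s t. 0)" "smul (\<lambda>j s t. 0) f = (\<lambda>j s t. 0)"
  by (auto simp: smul_def)

lemma deg_le_pos: "deg_le M f \<Longrightarrow> deg_le M (pos f)"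
  by (auto simp: deg_le_def pos_def)

lemma deg_bounded_pos [simp]: "deg_bounded f \<Longrightarrow> deg_bounded (pos f)"
  using deg_le_pos deg_boundedI unfolding deg_bounded_def by blast

lemma ser_pdiff_pos [simp]: "ser_pdiff v f \<Longrightarrow> ser_pdiff v (pos f)"
  by (auto simp: ser_pdiff_def pos_def)

lemma fls_at_nonzero: "deg_bounded f \<Longrightarrow> f j s t \<noteq> 0 \<Longrightarrow> fls_at f s t \<noteq> 0"
  by (metis fls_at_nth fls_zero_nth minus_minus)

lemma smul_left_cancel:
  assumes "deg_bounded P" "deg_bounded X" "deg_bounded Y" "\<And>s t. fls_at P s t \<noteq> 0"
    and "smul P X = smul P Y"
  shows "X = Y"
proof (rule ser_eqI[OF assms(2,3)])
  fix s t
  have "fls_at P s t * fls_at X s t = fls_at P s t * fls_at Y s t"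
    using arg_cong[OF assms(5), of "\<lambda>f. fls_at f s t"] assms(1-3) by simp
  then show "fls_at X s t = fls_at Y s t" using assms(4) by simp
qed

lemma gbin_eq_0: "0 \<le> m \<Longrightarrow> m < r \<Longrightarrow> gbin m r = 0"
  using binomial_gbinomial[of "nat m" "nat r", where 'a = real] binomial_eq_0[of "nat m" "nat r"]
  by (simp add: gbin_def)

lemma gbinomial_of_int_self: "0 \<le> m \<Longrightarrow> (of_int m :: real) gchoose nat m = 1"
  using binomial_gbinomial[of "nat m" "nat m", where 'a = real] by simp

lemma sshift_neg_coeff:
  assumes "deg_le M f" "\<And>m s t. m < 0 \<Longrightarrow> f m s t = 0" "j < 0"
  shows "sshift a f j s t = 0"
  unfolding sshift_eq_shift_coeff[OF assms(1)] shift_coeff_def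
proof (rule sum.neutral, intro ballI)
  fix m assume "m \<in> {j..M}"
  show "f m s t * gbin m (m - j) * (- a s t) ^ nat (m - j) = 0"
    using assms(2)[of m] gbin_eq_0[of m "m - j"] assms(3) by (cases "m < 0") simp_all
qed

lemma pos_sshift:
  assumes "deg_bounded f"
  shows "pos (sshift a f) = ssub (sshift a (pos f)) (cst (\<lambda>s t. sshift a (pos f) 0 s t))"
proof (intro ext)
  fix j :: int and s t
  obtain M where M: "deg_le M f"
    using assms by (auto simp: deg_bounded_def)
  consider "0 < j" | "j = 0" | "j < 0" by linarith
  then show "pos (sshift a f) j s t = ssub (sshift a (pos f)) (cst (\<lambda>s t. sshift a (pos f) 0 s t)) j s t"
  proof cases
    case 1
    have "sshift a (pos f) j s t = shift_coeff (- a s t) M (\<lambda>m. pos f m s t) j"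
      by (rule sshift_eq_shift_coeff[OF deg_le_pos[OF M]])
    also have "\<dots> = shift_coeff (- a s t) M (\<lambda>m. f m s t) j"
      unfolding shift_coeff_def by (rule sum.cong) (use 1 in \<open>auto simp: pos_def\<close>)
    also have "\<dots> = sshift a f j s t"
      by (rule sshift_eq_shift_coeff[OF M, symmetric])
    finally show ?thesis using 1 by (simp add: pos_def ssub_def cst_def)
  next
    case 3
    then have "sshift a (pos f) j s t = 0"
      by (intro sshift_neg_coeff[OF deg_le_pos[OF M]]) (auto simp: pos_def)
    then show ?thesis using 3 by (simp add: pos_def ssub_def cst_def)
  qed (simp add: pos_def ssub_def cst_def)
qed

lemma sshift_pos_coeff_0: "sshift a (pos f) 0 s t = evalpos (pos f) (\<lambda>s t. - a s t) s t"
proof -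
  have "sshift a (pos f) 0 s t = (\<Sum>m\<in>{m. 0 \<le> m \<and> pos f m s t \<noteq> 0}. pos f m s t * (- a s t) ^ nat m)"
    unfolding sshift_def by (rule sum.cong) (auto simp: gbinomial_of_int_self)
  also have "\<dots> = evalpos (pos f) (\<lambda>s t. - a s t) s t"
    unfolding evalpos_def by (rule sum.cong) (auto simp: pos_def split: if_splits)
  finally show ?thesis .
qed

lemma Bn_sshift:
  assumes "deg_bounded L"
    and "\<forall>s t. pd (T n) \<phi> s t = - evalpos (Bn L n) (\<lambda>s t. - a s t) s t"
  shows "Bn (sshift a L) n = ssub (sshift a (Bn L n)) (cst (\<lambda>s t. - pd (T n) \<phi> s t))"
  using assms by (simp add: Bn_def sshift_spow[symmetric] pos_sshift sshift_pos_coeff_0)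

text \<open>The coefficients of \<open>e\<^sup>g \<P>(k - a)\<close>, listed from the leading one as in \<^const>\<open>polyser\<close>.\<close>

definition ptrans :: "nat \<Rightarrow> (nat \<Rightarrow> fn) \<Rightarrow> fn \<Rightarrow> fn \<Rightarrow> nat \<Rightarrow> fn" where
  "ptrans N p a g = (\<lambda>i s t. exp (g s t) * sshift a (polyser N p) (int N - int i) s t)"

lemma polyser_ptrans:
  "polyser N (ptrans N p a g) = smul (cst (\<lambda>s t. exp (g s t))) (sshift a (polyser N p))"
proof (intro ext)
  fix j s t
  show "polyser N (ptrans N p a g) j s t = smul (cst (\<lambda>s t. exp (g s t))) (sshift a (polyser N p)) j s t"
  proof (cases "0 \<le> j \<and> j \<le> int N")
    case True
    then have "polyser N (ptrans N p a g) j s t = ptrans N p a g (N - nat j) s t"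
      by (simp add: polyser_def)
    moreover have "int N - int (N - nat j) = j" using True by auto
    ultimately show ?thesis using True by (simp add: smul_cst ptrans_def)
  next
    case False
    have "sshift a (polyser N p) j s t = 0"
    proof (cases "j < 0")
      case True
      then show ?thesis by (intro sshift_neg_coeff[OF deg_le_polyser]) (simp_all add: polyser_def)
    next
      case False
      then show ?thesis
        using \<open>\<not> (0 \<le> j \<and> j \<le> int N)\<close> deg_le_sshift[OF deg_le_polyser] by (auto simp: deg_le_def)
    qed
    moreover have "polyser N (ptrans N p a g) j s t = 0"
      using False by (auto simp: polyser_def)
    ultimately show ?thesis by (simp add: smul_cst)
  qed
qed

lemma ptrans_lead_nonzero: "p 0 s t \<noteq> 0 \<Longrightarrow> ptrans N p a g 0 s t \<noteq> 0"
  by (simp only: ptrans_def sshift_eq_shift_coeff[OF deg_le_polyser])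
    (simp add: shift_coeff_def gbin_def polyser_def)

lemma pdiff_ptrans:
  assumes "\<forall>i\<le>N. pdiff v (p i)" "pdiff v a" "pdiff v g"
  shows "pdiff v (ptrans N p a g i)"
proof -
  have "ser_pdiff v (sshift a (polyser N p))"
    using assms by simp
  then show ?thesis
    unfolding ptrans_def using assms(3) by (intro pdiff_mult pdiff_exp) (simp_all add: ser_pdiff_def)
qed

lemma fls_at_polyser_ptrans_nonzero:
  "\<forall>s t. p 0 s t \<noteq> 0 \<Longrightarrow> fls_at (polyser N (ptrans N p a g)) s t \<noteq> 0"
  by (rule fls_at_nonzero[OF deg_bounded_polyser, where j = "int N"])
    (simp add: polyser_def ptrans_lead_nonzero)

lemma dlogP_k_ptrans:
  assumes "\<forall>s t. p 0 s t \<noteq> 0"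
  shows "dlogP_k N (ptrans N p a g) = sshift a (dlogP_k N p)"
proof (rule smul_left_cancel[OF deg_bounded_polyser deg_bounded_dlogP_k
      deg_bounded_sshift[OF deg_bounded_dlogP_k] fls_at_polyser_ptrans_nonzero[where p = p, OF assms]])
  have "smul (polyser N (ptrans N p a g)) (sshift a (dlogP_k N p)) = dk (polyser N (ptrans N p a g))"
  proof (rule ser_eqI)
    fix s t
    have "fls_at (sshift a (polyser N p)) s t * fls_at (sshift a (dlogP_k N p)) s t
        = fls_at (sshift a (smul (polyser N p) (dlogP_k N p))) s t"
      by (simp add: sshift_smul)
    also have "\<dots> = fls_dk (fls_at (sshift a (polyser N p)) s t)"
      by (simp add: polyser_mult_dlogP_k[where p = p, OF assms] dk_sshift[symmetric])
    finally have "fls_at (sshift a (polyser N p)) s t * fls_at (sshift a (dlogP_k N p)) s t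
        = fls_dk (fls_at (sshift a (polyser N p)) s t)" .
    then show "fls_at (smul (polyser N (ptrans N p a g)) (sshift a (dlogP_k N p))) s t
        = fls_at (dk (polyser N (ptrans N p a g))) s t"
      by (simp add: polyser_ptrans mult.assoc)
  qed auto
  then show "smul (polyser N (ptrans N p a g)) (dlogP_k N (ptrans N p a g))
      = smul (polyser N (ptrans N p a g)) (sshift a (dlogP_k N p))"
    using polyser_mult_dlogP_k[of "ptrans N p a g"] assms ptrans_lead_nonzero by simp
qed

lemma dlogP_v_ptrans:
  assumes p: "\<forall>s t. p 0 s t \<noteq> 0" "\<forall>i\<le>N. pdiff v (p i)" and "pdiff v a" "pdiff v g"
  shows "dlogP_v v N (ptrans N p a g)
    = sadd (cst (pd v g)) (ssub (sshift a (dlogP_v v N p)) (smul (cst (pd v a)) (sshift a (dlogP_k N p))))"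
proof (rule smul_left_cancel[OF deg_bounded_polyser deg_bounded_dlogP_v _
      fls_at_polyser_ptrans_nonzero[where p = p, OF assms(1)]])
  have "sd v (polyser N (ptrans N p a g))
      = sadd (smul (cst (pd v (\<lambda>s t. exp (g s t)))) (sshift a (polyser N p)))
          (smul (cst (\<lambda>s t. exp (g s t)))
            (ssub (sshift a (sd v (polyser N p))) (smul (cst (pd v a)) (sshift a (dk (polyser N p))))))"
    using assms by (simp add: polyser_ptrans pdiff_exp sd_sshift)
  also have "\<dots> = smul (polyser N (ptrans N p a g)) (sadd (cst (pd v g))
      (ssub (sshift a (dlogP_v v N p)) (smul (cst (pd v a)) (sshift a (dlogP_k N p)))))"
  proof (rule ser_eqI)
    fix s t
    have "fls_at (sshift a (sd v (polyser N p))) s t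
        = fls_at (sshift a (polyser N p)) s t * fls_at (sshift a (dlogP_v v N p)) s t"
      "fls_at (sshift a (dk (polyser N p))) s t
        = fls_at (sshift a (polyser N p)) s t * fls_at (sshift a (dlogP_k N p)) s t"
      by (simp_all add: sshift_smul
          flip: polyser_mult_dlogP_v[where p = p, OF p] polyser_mult_dlogP_k[where p = p, OF p(1)])
    then show "fls_at (sadd (smul (cst (pd v (\<lambda>s t. exp (g s t)))) (sshift a (polyser N p)))
          (smul (cst (\<lambda>s t. exp (g s t)))
            (ssub (sshift a (sd v (polyser N p))) (smul (cst (pd v a)) (sshift a (dk (polyser N p))))))) s t
        = fls_at (smul (polyser N (ptrans N p a g)) (sadd (cst (pd v g))
          (ssub (sshift a (dlogP_v v N p)) (smul (cst (pd v a)) (sshift a (dlogP_k N p)))))) s t"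
      by (simp add: polyser_ptrans pd_exp[OF assms(4)] algebra_simps)
  qed auto
  finally show "smul (polyser N (ptrans N p a g)) (dlogP_v v N (ptrans N p a g))
      = smul (polyser N (ptrans N p a g)) (sadd (cst (pd v g))
          (ssub (sshift a (dlogP_v v N p)) (smul (cst (pd v a)) (sshift a (dlogP_k N p)))))"
    using polyser_mult_dlogP_v[of "ptrans N p a g"] assms ptrans_lead_nonzero pdiff_ptrans by simp
qed simp

section \<open>The transformed equations\<close>

context
  fixes N :: nat and p :: "nat \<Rightarrow> fn" and \<phi> :: fn and L :: ser
  assumes L: "deg_bounded L" "\<And>v. ser_pdiff v L"
    and p: "\<forall>s t. p 0 s t \<noteq> 0" "\<And>v. \<forall>i\<le>N. pdiff v (p i)"
    and \<phi>: "\<And>v w. pdiff v (pd w \<phi>)" "\<And>v w. pd v (pd w \<phi>) = pd w (pd v \<phi>)"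
begin

abbreviation (input) a :: fn where "a \<equiv> pd (T 0) \<phi>"
abbreviation (input) g :: fn where "g \<equiv> pd S \<phi>"

lemma deg_bounded_Bn: "deg_bounded (Bn L n)"
  using L by (simp add: Bn_def)

lemma ser_pdiff_Bn: "ser_pdiff v (Bn L n)"
  using L by (simp add: Bn_def)

lemma dlogP_k_ptrans_phi: "dlogP_k N (ptrans N p a g) = sshift a (dlogP_k N p)"
  by (rule dlogP_k_ptrans[where p = p, OF p(1)])

lemma dlogP_v_ptrans_phi:
  "dlogP_v v N (ptrans N p a g)
    = sadd (cst (pd v g)) (ssub (sshift a (dlogP_v v N p)) (smul (cst (pd v a)) (sshift a (dlogP_k N p))))"
  by (rule dlogP_v_ptrans[where p = p, OF p \<phi>(1) \<phi>(1)])

lemma sshift_Lax_T: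
  assumes "sd (T n) L = pbr (Bn L n) L"
    and "\<forall>s t. pd (T n) \<phi> s t = - evalpos (Bn L n) (\<lambda>s t. - a s t) s t"
  shows "sd (T n) (sshift a L) = pbr (Bn (sshift a L) n) (sshift a L)"
proof (rule ser_eqI)
  have B: "Bn (sshift a L) n = ssub (sshift a (Bn L n)) (cst (\<lambda>s t. - pd (T n) \<phi> s t))"
    by (rule Bn_sshift[OF L(1) assms(2)])
  have "pd (T 0) (\<lambda>s t. - pd (T n) \<phi> s t) = (\<lambda>s t. - pd (T n) a s t)"
    using \<phi> by (simp add: pd_minus)
  with B show "fls_at (sd (T n) (sshift a L)) s t = fls_at (pbr (Bn (sshift a L) n) (sshift a L)) s t" for s t
    using L \<phi>(1) deg_bounded_Bn ser_pdiff_Bn assms(1)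
    by (simp add: sd_sshift pbr_def sshift_ssub sshift_smul dk_sshift algebra_simps)
  show "deg_bounded (pbr (Bn (sshift a L) n) (sshift a L))"
    using B L deg_bounded_Bn by (simp add: pbr_def)
qed (use L in simp)

lemma sshift_Lax_S:
  assumes "sd S L = brlog N p L"
  shows "sd S (sshift a L) = brlog N (ptrans N p a g) (sshift a L)"
proof (rule ser_eqI)
  have "pd S a = pd (T 0) g" using \<phi> by simp
  then show "fls_at (sd S (sshift a L)) s t = fls_at (brlog N (ptrans N p a g) (sshift a L)) s t" for s t
    using L \<phi>(1) assms
    by (simp add: sd_sshift brlog_def sshift_ssub sshift_smul dk_sshift dlogP_k_ptrans_phi
        dlogP_v_ptrans_phi algebra_simps)
qed (use L in \<open>simp_all add: brlog_def dlogP_k_ptrans_phi dlogP_v_ptrans_phi\<close>)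

lemma sshift_logP_T:
  assumes "dlogP_v (T n) N p = ssub (sd S (Bn L n)) (brlog N p (Bn L n))"
    and "\<forall>s t. pd (T n) \<phi> s t = - evalpos (Bn L n) (\<lambda>s t. - a s t) s t"
  shows "dlogP_v (T n) N (ptrans N p a g)
    = ssub (sd S (Bn (sshift a L) n)) (brlog N (ptrans N p a g) (Bn (sshift a L) n))"
proof (rule ser_eqI)
  have B: "Bn (sshift a L) n = ssub (sshift a (Bn L n)) (cst (\<lambda>s t. - pd (T n) \<phi> s t))"
    by (rule Bn_sshift[OF L(1) assms(2)])
  have "pd S a = pd (T 0) g"
    "pd (T 0) (\<lambda>s t. - pd (T n) \<phi> s t) = (\<lambda>s t. - pd (T n) a s t)"
    "pd S (\<lambda>s t. - pd (T n) \<phi> s t) = (\<lambda>s t. - pd (T n) g s t)"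
    using \<phi> by (simp_all add: pd_minus)
  with B show "fls_at (dlogP_v (T n) N (ptrans N p a g)) s t
      = fls_at (ssub (sd S (Bn (sshift a L) n)) (brlog N (ptrans N p a g) (Bn (sshift a L) n))) s t" for s t
    using L \<phi>(1) deg_bounded_Bn ser_pdiff_Bn assms(1)
    by (simp add: dlogP_v_ptrans_phi sd_sshift brlog_def sshift_ssub sshift_smul dk_sshift
        dlogP_k_ptrans_phi algebra_simps)
  show "deg_bounded (ssub (sd S (Bn (sshift a L) n)) (brlog N (ptrans N p a g) (Bn (sshift a L) n)))"
    using B deg_bounded_Bn by (simp add: brlog_def dlogP_k_ptrans_phi dlogP_v_ptrans_phi)
qed simp

lemma dcmKP_ptrans:
  assumes "dcmKP N L p"
    and "\<forall>n\<ge>1. \<forall>s t. pd (T n) \<phi> s t = - evalpos (Bn L n) (\<lambda>s t. - a s t) s t"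
  shows "dcmKP N (sshift a L) (ptrans N p a g)"
  using assms sshift_Lax_T sshift_Lax_S sshift_logP_T unfolding dcmKP_def by blast

end

section \<open>The exponential of \<open>ad \<phi>\<close>\<close>

lemma ad_eq: "ad F f = (\<lambda>j s t. - pd (T 0) F s t * dk f j s t)"
  by (intro ext) (simp add: ad_def pbr_def ssub_def smul_cst)

lemma dk_cmult: "dk (\<lambda>j s t. c s t * h j s t) = (\<lambda>j s t. c s t * dk h j s t)"
  by (intro ext) (simp add: dk_def algebra_simps)

lemma funpow_ad: "(ad F ^^ m) f = (\<lambda>j s t. (- pd (T 0) F s t) ^ m * (dk ^^ m) f j s t)"
proof (induction m)
  case (Suc m)
  have "(ad F ^^ Suc m) f = ad F ((ad F ^^ m) f)" by simp
  also have "\<dots> = (\<lambda>j s t. (- pd (T 0) F s t) ^ Suc m * (dk ^^ Suc m) f j s t)"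
    unfolding Suc ad_eq dk_cmult by (intro ext) (simp add: algebra_simps)
  finally show ?case .
qed simp

lemma funpow_dk: "(dk ^^ m) f j s t = pochhammer (of_int j + 1) m * f (j + int m) s t"
proof (induction m arbitrary: j)
  case (Suc m)
  have "(dk ^^ Suc m) f j s t = of_int (j + 1) * (dk ^^ m) f (j + 1) s t"
    by (simp add: dk_def funpow_Suc_right[symmetric] del: funpow.simps)
       (simp add: funpow_Suc_right dk_def)
  also have "\<dots> = pochhammer (of_int j + 1) (Suc m) * f (j + int (Suc m)) s t"
    unfolding Suc by (simp add: pochhammer_rec algebra_simps)
  finally show ?case .
qed simp

text \<open>Since \<open>ad F = -\<partial>\<^sub>xF \<partial>\<^sub>k\<close>, the series defining \<^const>\<open>expad\<close> is the (finite) Taylor expansion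
  of \<open>f(k - \<partial>\<^sub>xF)\<close>.\<close>

lemma expad_eq_sshift:
  assumes M: "deg_le M f"
  shows "expad F f = sshift (pd (T 0) F) f"
proof (intro ext)
  fix j s t
  define b where "b = - pd (T 0) F s t"
  define K where "K = nat (M - j)"
  define h where "h = (\<lambda>m. b ^ m * (pochhammer (of_int j + 1) m / fact m) * f (j + int m) s t)"
  have "h m = 0" if "m \<notin> {0..K}" for m
    using that deg_leD[OF M, of "j + int m"] by (auto simp: K_def h_def)
  then have "expad F f j s t = (\<Sum>m\<in>{0..K}. h m)"
    unfolding expad_def funpow_ad funpow_dk h_def b_def
    by (subst suminf_finite[of "{0..K}"]) (auto simp: algebra_simps h_def b_def)
  also have "\<dots> = sshift (pd (T 0) F) f j s t"
  proof (cases "j \<le> M")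
    case True
    have "sshift (pd (T 0) F) f j s t = (\<Sum>k\<in>{j..M}. f k s t * gbin k (k - j) * b ^ nat (k - j))"
      by (simp add: sshift_eq_shift_coeff[OF M] shift_coeff_def b_def)
    also have "\<dots> = (\<Sum>m\<in>{0..K}. h m)"
    proof (rule sum.reindex_bij_witness[of _ "\<lambda>m. j + int m" "\<lambda>k. nat (k - j)"])
      fix k assume k: "k \<in> {j..M}"
      then have "gbin k (k - j) = pochhammer (of_int j + 1) (nat (k - j)) / fact (nat (k - j))"
        by (simp add: gbin_def gbinomial_pochhammer')
      then show "h (nat (k - j)) = f k s t * gbin k (k - j) * b ^ nat (k - j)"
        using k by (simp add: h_def)
    qed (use True in \<open>auto simp: K_def\<close>)
    finally show ?thesis by simp
  next
    case False
    then show ?thesis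
      using deg_leD[OF M] by (simp add: sshift_eq_shift_coeff[OF M] shift_coeff_def K_def h_def)
  qed
  finally show "expad F f j s t = sshift (pd (T 0) F) f j s t" .
qed

lemma smooth_pdiff: "smooth F \<Longrightarrow> pdiff v F"
  unfolding smooth_def by (drule spec[of _ "[]"]) simp

lemma smooth_pdiff_pd: "smooth F \<Longrightarrow> pdiff v (pd w F)"
  unfolding smooth_def by (drule spec[of _ "[w]"]) simp

lemma smooth_pd_commute: "smooth F \<Longrightarrow> pd v (pd w F) = pd w (pd v F)"
  unfolding smooth_def by (drule spec[of _ "[]"]) simp

theorem mainTheorem14:
  fixes N :: nat and u :: "nat \<Rightarrow> fn" and p :: "nat \<Rightarrow> fn" and \<phi> :: fn
    and L Lt :: ser and pt :: "nat \<Rightarrow> fn"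
  defines "L \<equiv> (\<lambda>j. if j = 1 then (\<lambda>s t. 1) else if j \<le> 0 then u (nat (1 - j)) else (\<lambda>s t. 0))"
  defines "Lt \<equiv> sshift (pd (T 0) \<phi>) L"
  defines "pt \<equiv> (\<lambda>i s t. exp (pd S \<phi> s t) * sshift (pd (T 0) \<phi>) (polyser N p) (int N - int i) s t)"
  assumes "N \<ge> 1"
    and "\<forall>n\<ge>1. smooth (u n) \<and> xt_conv (u n)"
    and "\<forall>i\<le>N. smooth (p i) \<and> xt_conv (p i)"
    and "smooth \<phi>" and "xt_conv \<phi>"
    and "\<forall>s t. p 0 s t \<noteq> 0"
    and "dcmKP N L p"
    and "\<forall>n\<ge>1. \<forall>s t. pd (T n) \<phi> s t = - evalpos (Bn L n) (\<lambda>s t. - pd (T 0) \<phi> s t) s t"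
  shows "Lt = expad \<phi> L \<and> dcmKP N Lt pt"
proof -
  have L: "deg_le 1 L"
    by (simp add: deg_le_def L_def)
  have "ser_pdiff v L" for v
    unfolding ser_pdiff_def L_def using assms(5) smooth_pdiff by auto
  moreover have "\<forall>i\<le>N. pdiff v (p i)" for v
    using assms(6) smooth_pdiff by auto
  moreover have "pdiff v (pd w \<phi>)" "pd v (pd w \<phi>) = pd w (pd v \<phi>)" for v w
    using assms(7) smooth_pdiff_pd smooth_pd_commute by auto
  ultimately have "dcmKP N Lt (ptrans N p (pd (T 0) \<phi>) (pd S \<phi>))"
    unfolding Lt_def by (rule dcmKP_ptrans[OF deg_boundedI[OF L] _ assms(9) _ _ _ assms(10,11)])
  moreover have "pt = ptrans N p (pd (T 0) \<phi>) (pd S \<phi>)"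
    by (simp add: pt_def ptrans_def)
  moreover have "Lt = expad \<phi> L"
    unfolding Lt_def by (rule expad_eq_sshift[OF L, symmetric])
  ultimately show ?thesis by simp
qed

end
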